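(* Let $\mathcal H$ be a real Hilbert space, let $\beta\in\left]0,+\infty\right[$, let $\varepsilon\in\left]0,\min\{1/2,\beta\}\right[$, let $x_0\in\mathcal H$, let $A\colon\mathcal H\to 2^{\mathcal H}$ be maximally monotone, and let $B\colon\mathcal H\to\mathcal H$ be $\beta$-cocoercive, i.e., $\langle x-y, Bx-By\rangle\geq\beta\|Bx-By\|^2$ for all $x,y\in\mathcal H$. Let $(\gamma_n)_{n\in\mathbb N}$ be a sequence in $\left[\varepsilon,2\beta/(1+\varepsilon)\right]$, and let $(a_n)_{n\in\mathbb N}$ and $(b_n)_{n\in\mathbb N}$ be sequences in $\mathcal H$ such that $\sum_{n\in\mathbb N}\|a_n\|<+\infty$ and $\sum_{n\in\mathbb N}\|b_n\|<+\infty$. Suppose that $\mathrm{zer}(A+B)\neq\varnothing$ and, for every $n\in\mathbb N$, let $$\lambda_n\in\left[\varepsilon,(1-\varepsilon)\Big(2+\varepsilon-\frac{\gamma_n}{2\beta}\Big)\right]$$ and set $x_{n+1}=x_n+\lambda_n\big(J_{\gamma_n A}(x_n-\gamma_n(Bx_n+b_n))+a_n-x_n\big)$. Then: (i) $\sum_{n\in\mathbb N}\|J_{\gamma_n A}(x_n-\gamma_nBx_n)-x_n\|^2<+\infty$; (ii) for every $x\in\mathrm{zer}(A+B)$, $\sum_{n\in\mathbb N}\|Bx_n-Bx\|^2<+\infty$; (iii) $(x_n)_{n\in\mathbb N}$ converges weakly to a point in $\mathrm{zer}(A+B)$; (iv) suppose that one of the following holds: (a) $A$ is demiregular at every point in $\mathrm{zer}(A+B)$;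 (b) $B$ is demiregular at every point in $\mathrm{zer}(A+B)$; (c) $\mathrm{int}\,\mathrm{zer}(A+B)\neq\varnothing$. Then $(x_n)_{n\in\mathbb N}$ converges strongly to a point in $\mathrm{zer}(A+B)$.
   Context: $\mathrm{zer}\,C=\{x\mid 0\in Cx\}$, $\mathrm{dom}\,C=\{x\mid Cx\neq\varnothing\}$, $\mathrm{gra}\,C=\{(x,u)\mid u\in Cx\}$. The resolvent of $C$ is $J_C=(\mathrm{Id}+C)^{-1}$. An operator $C\colon\mathcal H\to2^{\mathcal H}$ is demiregular at $x\in\mathrm{dom}\,C$ if for every sequence $((x_n,u_n))_{n\in\mathbb N}$ in $\mathrm{gra}\,C$ and every $u\in Cx$ such that $x_n\rightharpoonup x$ (weakly) and $u_n\to u$ (strongly), one has $x_n\to x$. $\mathrm{int}$ denotes interior. *)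

theory Defs
  imports "HOL-Analysis.Analysis"
begin

definition gra :: "('a \<Rightarrow> 'b set) \<Rightarrow> ('a \<times> 'b) set" where
  "gra C = {(x, u). u \<in> C x}"

definition dom_op :: "('a \<Rightarrow> 'b set) \<Rightarrow> 'a set" where
  "dom_op C = {x. C x \<noteq> {}}"

definition zer :: "('a \<Rightarrow> 'b::zero set) \<Rightarrow> 'a set" where
  "zer C = {x. 0 \<in> C x}"

definition op_plus :: "('a \<Rightarrow> 'b::plus set) \<Rightarrow> ('a \<Rightarrow> 'b) \<Rightarrow> 'a \<Rightarrow> 'b set" where
  "op_plus A B x = (\<lambda>u. u + B x) ` A x"

definition op_scale :: "real \<Rightarrow> ('a \<Rightarrow> 'b::real_vector set) \<Rightarrow> 'a \<Rightarrow> 'b set" where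
  "op_scale \<gamma> A x = (\<lambda>u. \<gamma> *\<^sub>R u) ` A x"

definition monotone_op :: "('a::real_inner \<Rightarrow> 'a set) \<Rightarrow> bool" where
  "monotone_op C \<longleftrightarrow> (\<forall>(x, u)\<in>gra C. \<forall>(y, v)\<in>gra C. inner (x - y) (u - v) \<ge> 0)"

definition maximally_monotone :: "('a::real_inner \<Rightarrow> 'a set) \<Rightarrow> bool" where
  "maximally_monotone C \<longleftrightarrow> monotone_op C \<and>
     (\<forall>D. monotone_op D \<and> gra C \<subseteq> gra D \<longrightarrow> gra D = gra C)"

definition cocoercive :: "real \<Rightarrow> ('a::real_inner \<Rightarrow> 'a) \<Rightarrow> bool" where
  "cocoercive \<beta> B \<longleftrightarrow> (\<forall>x y. inner (x - y) (B x - B y) \<ge> \<beta> * (norm (B x - B y))\<^sup>2)"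

text \<open>Resolvent J_C = (Id + C)^{-1}, as a set-valued map, and its point-valued use
  (for maximally monotone operators the resolvent is single-valued with full domain).\<close>
definition resolvent_set :: "('a::real_vector \<Rightarrow> 'a set) \<Rightarrow> 'a \<Rightarrow> 'a set" where
  "resolvent_set C x = {p. x \<in> (\<lambda>u. p + u) ` C p}"

definition resolvent :: "('a::real_vector \<Rightarrow> 'a set) \<Rightarrow> 'a \<Rightarrow> 'a" where
  "resolvent C x = (THE p. p \<in> resolvent_set C x)"

definition weak_conv :: "(nat \<Rightarrow> 'a::real_inner) \<Rightarrow> 'a \<Rightarrow> bool" where
  "weak_conv xs x \<longleftrightarrow> (\<forall>y. (\<lambda>n. inner (xs n) y) \<longlonglongrightarrow> inner x y)"

definition demiregular_at :: "('a::real_inner \<Rightarrow> 'a set) \<Rightarrow> 'a \<Rightarrow> bool" where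
  "demiregular_at C x \<longleftrightarrow> x \<in> dom_op C \<and>
     (\<forall>xs us u. (\<forall>n. (xs n, us n) \<in> gra C) \<and> u \<in> C x \<and> weak_conv xs x \<and> us \<longlonglongrightarrow> u
        \<longrightarrow> xs \<longlonglongrightarrow> x)"

end

theory Submission
  imports Defs
begin

text \<open>For every zero \<open>z\<close> of \<open>A + B\<close>, firm nonexpansiveness of the resolvent \<open>J\<^sub>\<gamma>\<^sub>A\<close>, cocoercivity
  of \<open>B\<close> and Young's inequality show that the unperturbed step \<open>x + \<lambda> (J\<^sub>\<gamma>\<^sub>A (x - \<gamma> B x) - x)\<close> is
  closer to \<open>z\<close> than \<open>x\<close> by at least \<open>c\<^sub>1 \<parallel>J\<^sub>\<gamma>\<^sub>A (x - \<gamma> B x) - x\<parallel>\<^sup>2 + c\<^sub>2 \<parallel>B x - B z\<parallel>\<^sup>2\<close> in squared norm,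
  with \<open>c\<^sub>1, c\<^sub>2 > 0\<close> depending only on \<open>\<epsilon>\<close> and \<open>\<beta>\<close>. The errors \<open>a\<^sub>n, b\<^sub>n\<close> being summable, \<open>(x\<^sub>n)\<close> is
  quasi-Fejer monotone with respect to \<open>zer (A + B)\<close>, and telescoping gives (i) and (ii).
  The residuals dominate \<open>\<parallel>x\<^sub>n - T x\<^sub>n\<parallel>\<close> for the nonexpansive map \<open>T = J\<^sub>\<epsilon>\<^sub>A (Id - \<epsilon> B)\<close>, whose
  fixed points are the zeros, so Opial's lemma (proved with asymptotic centres, which needs no
  weak compactness) yields (iii). Demiregularity turns the weak limit into a strong one, using
  \<open>J\<^sub>\<gamma>\<^sub>A (x\<^sub>n - \<gamma> B x\<^sub>n) - x\<^sub>n \<rightarrow> 0\<close> and \<open>B x\<^sub>n \<rightarrow> B z\<close>; if \<open>zer (A + B)\<close> contains a ball, testing the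
  Fejer inequality at suitable points of the ball makes \<open>\<Sum> \<parallel>x\<^sub>n\<^sub>+\<^sub>1 - x\<^sub>n\<parallel>\<close> finite. The resolvent
  itself is well defined by Minty's theorem, proved here through the Fitzpatrick function.\<close>

lemma norm_convex_combination_power2:
  fixes a b :: "'a::real_inner"
  shows "(norm ((1 - t) *\<^sub>R a + t *\<^sub>R b))\<^sup>2
    = (1 - t) * (norm a)\<^sup>2 + t * (norm b)\<^sup>2 - t * (1 - t) * (norm (a - b))\<^sup>2"
  by (simp add: power2_norm_eq_inner inner_commute algebra_simps)

lemma Cauchy_of_power2_bound:
  fixes X :: "nat \<Rightarrow> 'a::real_normed_vector"
  assumes "\<And>j k. (norm (X j - X k))\<^sup>2 \<le> c * (1 / (real j + 1) + 1 / (real k + 1))"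
  shows "Cauchy X"
  unfolding Cauchy_def
proof (intro allI impI)
  fix e :: real assume e: "e > 0"
  obtain N :: nat where N: "2 * (\<bar>c\<bar> + 1) / e\<^sup>2 < real N" using reals_Archimedean2 by blast
  have Npos: "N > 0" using N e by (cases N) (auto simp: field_simps)
  show "\<exists>M. \<forall>j\<ge>M. \<forall>k\<ge>M. dist (X j) (X k) < e"
  proof (intro exI allI impI)
    fix j k assume "N \<le> j" "N \<le> k"
    have "1 / (real j + 1) \<le> 1 / real N" "1 / (real k + 1) \<le> 1 / real N"
      using \<open>N \<le> j\<close> \<open>N \<le> k\<close> Npos by (simp_all add: frac_le)
    then have "1 / (real j + 1) + 1 / (real k + 1) \<le> 2 / real N" by simp
    then have "c * (1 / (real j + 1) + 1 / (real k + 1)) \<le> (\<bar>c\<bar> + 1) * (2 / real N)"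
      by (intro mult_mono) auto
    also have "\<dots> < e\<^sup>2" using N Npos e by (simp add: field_simps)
    finally have "(norm (X j - X k))\<^sup>2 < e\<^sup>2" using assms[of j k] by linarith
    then show "dist (X j) (X k) < e" using e by (simp add: dist_norm power_less_imp_less_base)
  qed
qed

text \<open>The objective is strongly convex in \<open>z\<close>, so by the parallelogram identity minimising
  sequences are Cauchy.\<close>

lemma convex_quadratic_min_exists:
  fixes S :: "('v::{real_inner,complete_space} \<times> real) set"
  assumes "convex S" "closed S" "S \<noteq> {}" and bdd: "\<And>z c. (z, c) \<in> S \<Longrightarrow> m0 \<le> c + (norm z)\<^sup>2 / 2"
  shows "\<exists>(z, c)\<in>S. \<forall>(w, d)\<in>S. c + (norm z)\<^sup>2 / 2 \<le> d + (norm w)\<^sup>2 / 2"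
proof -
  define f where "f = (\<lambda>(z, c). c + (norm (z::'v))\<^sup>2 / 2)"
  define m where "m = Inf (f ` S)"
  have bdd': "bdd_below (f ` S)" using bdd by (intro bdd_belowI2[of _ m0]) (auto simp: f_def)
  have m_le: "m \<le> f s" if "s \<in> S" for s
    unfolding m_def using bdd' that by (intro cInf_lower) auto
  have "\<exists>s\<in>S. f s < m + 1 / (real n + 1)" for n
    using cInf_lessD[of "f ` S" "m + 1 / (real n + 1)"] \<open>S \<noteq> {}\<close> by (auto simp: m_def)
  then obtain s where s: "\<And>n. s n \<in> S" "\<And>n. f (s n) < m + 1 / (real n + 1)" by metis
  have mid: "f ((1/2) *\<^sub>R s j + (1/2) *\<^sub>R s k)
      = f (s j) / 2 + f (s k) / 2 - (norm (fst (s j) - fst (s k)))\<^sup>2 / 8" for j k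
    using norm_convex_combination_power2[of "1/2" "fst (s j)" "fst (s k)"]
    by (simp add: f_def case_prod_unfold field_simps)
  have "Cauchy (fst \<circ> s)"
  proof (rule Cauchy_of_power2_bound[of _ 4])
    fix j k
    have "m \<le> f ((1/2) *\<^sub>R s j + (1/2) *\<^sub>R s k)"
      using s(1) \<open>convex S\<close> by (intro m_le) (auto simp: convex_def)
    then show "(norm ((fst \<circ> s) j - (fst \<circ> s) k))\<^sup>2 \<le> 4 * (1 / (real j + 1) + 1 / (real k + 1))"
      using s(2)[of j] s(2)[of k] unfolding mid o_def by argo
  qed
  then obtain z where z: "(fst \<circ> s) \<longlonglongrightarrow> z" using convergent_eq_Cauchy by blast
  have fs: "(\<lambda>n. f (s n)) \<longlonglongrightarrow> m"
  proof (rule tendsto_sandwich[OF _ _ tendsto_const])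
    show "(\<lambda>n. m + 1 / (real n + 1)) \<longlonglongrightarrow> m"
      using LIMSEQ_inverse_real_of_nat_add[of m] by (simp add: inverse_eq_divide add.commute)
  qed (use s m_le in \<open>auto intro!: always_eventually less_imp_le\<close>)
  have "(\<lambda>n. (fst (s n), f (s n) - (norm (fst (s n)))\<^sup>2 / 2)) \<longlonglongrightarrow> (z, m - (norm z)\<^sup>2 / 2)"
    using z fs by (intro tendsto_intros) (simp_all add: o_def)
  moreover have "(fst (s n), f (s n) - (norm (fst (s n)))\<^sup>2 / 2) = s n" for n
    by (simp add: f_def case_prod_unfold)
  ultimately have "s \<longlonglongrightarrow> (z, m - (norm z)\<^sup>2 / 2)" by simp
  then have "(z, m - (norm z)\<^sup>2 / 2) \<in> S"
    using closed_sequentially[OF \<open>closed S\<close>] s(1) by blast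
  moreover have "m \<le> d + (norm w)\<^sup>2 / 2" if "(w, d) \<in> S" for w d
    using m_le[OF that] by (simp add: f_def)
  ultimately show ?thesis by (intro bexI[of _ "(z, m - (norm z)\<^sup>2 / 2)"]) auto
qed

lemma convex_quadratic_min_variational_ineq:
  fixes S :: "('v::real_inner \<times> real) set"
  assumes "convex S" "(z, c) \<in> S" "(w, d) \<in> S"
    and min: "\<forall>(w', d')\<in>S. c + (norm z)\<^sup>2 / 2 \<le> d' + (norm w')\<^sup>2 / 2"
  shows "c + (norm z)\<^sup>2 \<le> d + inner z w"
proof -
  define a where "a = d + inner z w - c - (norm z)\<^sup>2"
  define K where "K = (norm (w - z))\<^sup>2 / 2"
  have *: "0 \<le> a + t * K" if "0 < t" "t \<le> 1" for t
  proof -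
    have "(1 - t) *\<^sub>R (z, c) + t *\<^sub>R (w, d) \<in> S"
      using assms(1-3) that by (intro convexD) auto
    moreover have "(1 - t) *\<^sub>R (z, c) + t *\<^sub>R (w, d) = (z + t *\<^sub>R (w - z), c + t * (d - c))"
      by (simp add: algebra_simps)
    ultimately have "(z + t *\<^sub>R (w - z), c + t * (d - c)) \<in> S" by simp
    then have "c + (norm z)\<^sup>2 / 2 \<le> c + t * (d - c) + (norm (z + t *\<^sub>R (w - z)))\<^sup>2 / 2"
      using min by blast
    also have "\<dots> = c + (norm z)\<^sup>2 / 2 + t * (a + t * K)"
      unfolding a_def K_def power2_norm_eq_inner
      by (simp add: algebra_simps inner_commute) (simp add: field_simps)
    finally show ?thesis using that by (simp add: zero_le_mult_iff)
  qed
  have "\<forall>\<^sub>F n in sequentially. 0 \<le> a + 1 / real n * K"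
    using eventually_gt_at_top[of "0::nat"] by (rule eventually_mono) (rule *; simp)
  moreover have "(\<lambda>n. a + 1 / real n * K) \<longlonglongrightarrow> a + 0 * K"
    by (intro tendsto_intros lim_1_over_n)
  ultimately have "0 \<le> a" by (simp add: tendsto_lowerbound)
  then show ?thesis by (simp add: a_def)
qed

lemma weak_conv_add_tendsto_zero:
  assumes "weak_conv x c" "r \<longlonglongrightarrow> 0"
  shows "weak_conv (\<lambda>n. x n + r n) c"
  unfolding weak_conv_def
proof
  fix v
  have "(\<lambda>n. inner (x n) v) \<longlonglongrightarrow> inner c v" using assms(1) by (simp add: weak_conv_def)
  moreover have "(\<lambda>n. inner (r n) v) \<longlonglongrightarrow> inner 0 v" using assms(2) by (intro tendsto_intros)
  ultimately have "(\<lambda>n. inner (x n) v + inner (r n) v) \<longlonglongrightarrow> inner c v + inner 0 v"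
    by (rule tendsto_add)
  then show "(\<lambda>n. inner (x n + r n) v) \<longlonglongrightarrow> inner c v" by (simp add: inner_add_left)
qed

section \<open>Maximally monotone operators and Minty's theorem\<close>

lemma monotone_opD:
  assumes "monotone_op C" "u \<in> C x" "v \<in> C y"
  shows "0 \<le> inner (x - y) (u - v)"
  using assms unfolding monotone_op_def gra_def by fastforce

lemma maximally_monotone_iff:
  "maximally_monotone C \<longleftrightarrow> monotone_op C \<and>
     (\<forall>x u. (\<forall>y v. v \<in> C y \<longrightarrow> 0 \<le> inner (x - y) (u - v)) \<longrightarrow> u \<in> C x)"
proof safe
  assume mm: "maximally_monotone C"
  then show mono: "monotone_op C" by (simp add: maximally_monotone_def)
  fix x u assume H: "\<forall>y v. v \<in> C y \<longrightarrow> 0 \<le> inner (x - y) (u - v)"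
  define D where "D = (\<lambda>z. if z = x then insert u (C x) else C z)"
  have H': "0 \<le> inner (y - x) (v - u)" if "v \<in> C y" for y v
    using H that by (metis inner_minus_left inner_minus_right minus_diff_eq)
  have "monotone_op D"
    unfolding monotone_op_def gra_def
    using monotone_opD[OF mono] H H' by (auto simp: D_def split: if_splits)
  moreover have "gra C \<subseteq> gra D" by (auto simp: gra_def D_def)
  ultimately have "gra D = gra C" using mm by (simp add: maximally_monotone_def)
  then show "u \<in> C x" by (auto simp: gra_def D_def)
next
  assume mono: "monotone_op C"
    and max: "\<forall>x u. (\<forall>y v. v \<in> C y \<longrightarrow> 0 \<le> inner (x - y) (u - v)) \<longrightarrow> u \<in> C x"
  have "gra D \<subseteq> gra C" if "monotone_op D" "gra C \<subseteq> gra D" for D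
    using that max monotone_opD[of D] by (fastforce simp: gra_def)
  with mono show "maximally_monotone C" by (auto simp: maximally_monotone_def)
qed

lemma maximally_monotoneD: "maximally_monotone C \<Longrightarrow> monotone_op C"
  by (simp add: maximally_monotone_def)

lemma maximally_monotone_memI:
  assumes "maximally_monotone C" "\<And>y v. v \<in> C y \<Longrightarrow> 0 \<le> inner (x - y) (u - v)"
  shows "u \<in> C x"
  using assms by (auto simp: maximally_monotone_iff)

text \<open>The epigraph of the Fitzpatrick function
  \<open>F\<^sub>C(x, u) = sup {\<langle>x, v\<rangle> + \<langle>y, u\<rangle> - \<langle>y, v\<rangle> | (y, v) \<in> gra C}\<close>, which may be \<open>+\<infinity>\<close>.\<close>

definition fitzpatrick_epigraph :: "('a::real_inner \<Rightarrow> 'a set) \<Rightarrow> (('a \<times> 'a) \<times> real) set" where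
  "fitzpatrick_epigraph C =
     {((x, u), c). \<forall>y v. v \<in> C y \<longrightarrow> inner x v + inner y u - inner y v \<le> c}"

lemma fitzpatrick_epigraph_eq_Inter_halfspaces:
  "fitzpatrick_epigraph C = (\<Inter>(y, v)\<in>gra C. {p. inner ((v, y), -1) p \<le> inner y v})"
  by (force simp: fitzpatrick_epigraph_def gra_def inner_commute)

lemma convex_fitzpatrick_epigraph: "convex (fitzpatrick_epigraph C)"
  unfolding fitzpatrick_epigraph_eq_Inter_halfspaces
  by (intro convex_INT ballI) (auto simp: convex_halfspace_le)

lemma closed_fitzpatrick_epigraph: "closed (fitzpatrick_epigraph C)"
  unfolding fitzpatrick_epigraph_eq_Inter_halfspaces
  by (intro closed_INT ballI) (auto simp: closed_halfspace_le)

lemma graph_mem_fitzpatrick_epigraph: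
  assumes "monotone_op C" "u \<in> C x"
  shows "((x, u), inner x u) \<in> fitzpatrick_epigraph C"
proof -
  have "inner x v + inner y u - inner y v \<le> inner x u" if "v \<in> C y" for y v
    using monotone_opD[OF assms(1) assms(2) that] by (simp add: algebra_simps inner_commute)
  then show ?thesis by (simp add: fitzpatrick_epigraph_def)
qed

lemma fitzpatrick_epigraph_inner_le:
  assumes "maximally_monotone C" "((x, u), c) \<in> fitzpatrick_epigraph C"
  shows "inner x u \<le> c"
proof (cases "u \<in> C x")
  case True
  then show ?thesis using assms(2) by (force simp: fitzpatrick_epigraph_def)
next
  case False
  then obtain y v where "v \<in> C y" "inner (x - y) (u - v) < 0"
    using maximally_monotone_memI[OF assms(1)] by (meson not_le)
  with assms(2) show ?thesis
    by (force simp: fitzpatrick_epigraph_def algebra_simps inner_commute)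
qed

text \<open>Minty's theorem, in the form \<open>0 \<in> ran (Id + C)\<close>. The minimiser \<open>((x, u), c)\<close> of
  \<open>c + (\<parallel>x\<parallel>\<^sup>2 + \<parallel>u\<parallel>\<^sup>2) / 2\<close> over the Fitzpatrick epigraph satisfies \<open>-x \<in> C (-u)\<close> and \<open>x + u = 0\<close>.\<close>

theorem maximally_monotone_ex_neg_mem:
  fixes C :: "'a::{real_inner,complete_space} \<Rightarrow> 'a set"
  assumes mm: "maximally_monotone C"
  shows "\<exists>p. - p \<in> C p"
proof -
  define S where "S = fitzpatrick_epigraph C"
  have mono: "monotone_op C" using mm by (rule maximally_monotoneD)
  have graph: "((y, v), inner y v) \<in> S" if "v \<in> C y" for y v
    unfolding S_def using graph_mem_fitzpatrick_epigraph[OF mono that] .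
  have "\<exists>y v. v \<in> C y"
    using maximally_monotone_memI[OF mm, of 0 0] by blast
  then have "S \<noteq> {}" using graph by blast
  have norm_pair: "(norm (x, u))\<^sup>2 = (norm x)\<^sup>2 + (norm u)\<^sup>2" for x u :: 'a
    by (simp add: power2_norm_eq_inner)
  have sq: "(norm (x + u))\<^sup>2 = (norm x)\<^sup>2 + (norm u)\<^sup>2 + 2 * inner x u" for x u :: 'a
    by (simp add: power2_norm_eq_inner inner_commute algebra_simps)
  have bound: "0 \<le> c + (norm p)\<^sup>2 / 2" if "(p, c) \<in> S" for p c
  proof -
    obtain x u where p: "p = (x, u)" by fastforce
    have "inner x u \<le> c" using that fitzpatrick_epigraph_inner_le[OF mm] by (simp add: S_def p)
    moreover have "0 \<le> (norm (x + u))\<^sup>2" by simp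
    ultimately show ?thesis unfolding p norm_pair sq by argo
  qed
  have "convex S" "closed S"
    unfolding S_def by (rule convex_fitzpatrick_epigraph, rule closed_fitzpatrick_epigraph)
  then obtain p c where pc: "(p, c) \<in> S" and min: "\<forall>(w, d)\<in>S. c + (norm p)\<^sup>2 / 2 \<le> d + (norm w)\<^sup>2 / 2"
    using convex_quadratic_min_exists[OF _ _ \<open>S \<noteq> {}\<close> bound] by blast
  obtain x u where p: "p = (x, u)" by fastforce
  have xuc: "((x, u), c) \<in> S" using pc by (simp add: p)
  have inner_le: "inner x u \<le> c"
    using xuc fitzpatrick_epigraph_inner_le[OF mm] by (simp add: S_def)
  have var: "inner x u + (norm x)\<^sup>2 + (norm u)\<^sup>2 \<le> inner y v + inner x y + inner u v" if "v \<in> C y" for y v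
    using convex_quadratic_min_variational_ineq[OF \<open>convex S\<close> pc graph[OF that] min] inner_le
    by (simp add: p norm_pair)
  have mem: "- x \<in> C (- u)"
  proof (rule maximally_monotone_memI[OF mm])
    fix y v assume "v \<in> C y"
    then have "(norm (x + u))\<^sup>2 \<le> inner (- u - y) (- x - v)"
      using var[of v y] sq by (simp add: algebra_simps inner_commute)
    then show "0 \<le> inner (- u - y) (- x - v)" by (meson order_trans zero_le_power2)
  qed
  have "(norm (x + u))\<^sup>2 \<le> 0"
    using var[OF mem] sq by (simp add: algebra_simps inner_commute)
  then have "- u = x" by (simp add: add_eq_0_iff)
  with mem show ?thesis by auto
qed

lemma maximally_monotone_scale_shift:
  assumes mm: "maximally_monotone A" and "\<gamma> > 0"
  shows "maximally_monotone (\<lambda>x. (\<lambda>u. \<gamma> *\<^sub>R u - p) ` A x)"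
  unfolding maximally_monotone_iff
proof (intro conjI allI impI)
  show "monotone_op (\<lambda>x. (\<lambda>u. \<gamma> *\<^sub>R u - p) ` A x)"
    using monotone_opD[OF maximally_monotoneD[OF mm]] \<open>\<gamma> > 0\<close>
    by (auto simp: monotone_op_def gra_def simp flip: scaleR_diff_right)
  fix x w assume H: "\<forall>y v. v \<in> (\<lambda>u. \<gamma> *\<^sub>R u - p) ` A y \<longrightarrow> 0 \<le> inner (x - y) (w - v)"
  define u where "u = (1 / \<gamma>) *\<^sub>R (w + p)"
  have w: "w = \<gamma> *\<^sub>R u - p" using \<open>\<gamma> > 0\<close> by (simp add: u_def)
  have "u \<in> A x"
  proof (rule maximally_monotone_memI[OF mm])
    fix y v assume "v \<in> A y"
    then have "0 \<le> inner (x - y) (w - (\<gamma> *\<^sub>R v - p))" using H by blast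
    also have "w - (\<gamma> *\<^sub>R v - p) = \<gamma> *\<^sub>R (u - v)" by (simp add: w algebra_simps)
    finally show "0 \<le> inner (x - y) (u - v)" using \<open>\<gamma> > 0\<close> by (simp add: zero_le_mult_iff)
  qed
  then show "w \<in> (\<lambda>u. \<gamma> *\<^sub>R u - p) ` A x" unfolding w by (rule imageI)
qed

section \<open>Resolvents and the forward-backward step\<close>

lemma resolvent_eq_iff:
  fixes A :: "'a::{real_inner,complete_space} \<Rightarrow> 'a set"
  assumes mm: "maximally_monotone A" and "\<gamma> > 0"
  shows "resolvent (op_scale \<gamma> A) p = a \<longleftrightarrow> (\<exists>u\<in>A a. p = a + \<gamma> *\<^sub>R u)"
proof -
  have mem: "a' \<in> resolvent_set (op_scale \<gamma> A) p \<longleftrightarrow> (\<exists>u\<in>A a'. p = a' + \<gamma> *\<^sub>R u)" for a'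
    by (auto simp: resolvent_set_def op_scale_def image_iff)
  obtain a0 u0 where a0: "u0 \<in> A a0" "p = a0 + \<gamma> *\<^sub>R u0"
    using maximally_monotone_ex_neg_mem[OF maximally_monotone_scale_shift[OF assms, of p]]
    by (auto simp: algebra_simps)
  have unique: "a' = a0" if "u' \<in> A a'" "p = a' + \<gamma> *\<^sub>R u'" for a' u'
  proof -
    have "0 \<le> inner (a' - a0) (u' - u0)"
      using monotone_opD[OF maximally_monotoneD[OF mm] that(1) a0(1)] .
    also have "a' - a0 = - \<gamma> *\<^sub>R (u' - u0)" using that(2) a0(2) by (simp add: algebra_simps)
    finally have "\<gamma> * (norm (u' - u0))\<^sup>2 \<le> 0" by (simp add: power2_norm_eq_inner)
    then have "u' = u0" using \<open>\<gamma> > 0\<close> by (simp add: mult_le_0_iff)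
    then show ?thesis using that(2) a0(2) by simp
  qed
  have "resolvent (op_scale \<gamma> A) p = a0"
    unfolding resolvent_def
  proof (rule the_equality)
    show "a0 \<in> resolvent_set (op_scale \<gamma> A) p" using a0 mem by blast
  next
    fix a' assume "a' \<in> resolvent_set (op_scale \<gamma> A) p"
    then obtain u' where "u' \<in> A a'" "p = a' + \<gamma> *\<^sub>R u'" using mem by blast
    then show "a' = a0" by (rule unique)
  qed
  then show ?thesis
  proof (intro iffI)
    assume "resolvent (op_scale \<gamma> A) p = a0" "resolvent (op_scale \<gamma> A) p = a"
    then show "\<exists>u\<in>A a. p = a + \<gamma> *\<^sub>R u" using a0 by blast
  next
    assume "\<exists>u\<in>A a. p = a + \<gamma> *\<^sub>R u"
    then obtain u where "u \<in> A a" "p = a + \<gamma> *\<^sub>R u" by blast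
    then have "a = a0" by (rule unique)
    then show "resolvent (op_scale \<gamma> A) p = a" using \<open>resolvent (op_scale \<gamma> A) p = a0\<close> by simp
  qed
qed

lemma resolvent_mem:
  fixes A :: "'a::{real_inner,complete_space} \<Rightarrow> 'a set"
  assumes "maximally_monotone A" and "\<gamma> > 0"
  shows "(1 / \<gamma>) *\<^sub>R (p - resolvent (op_scale \<gamma> A) p) \<in> A (resolvent (op_scale \<gamma> A) p)"
proof -
  define q where "q = resolvent (op_scale \<gamma> A) p"
  have "\<exists>u\<in>A q. p = q + \<gamma> *\<^sub>R u"
    using resolvent_eq_iff[OF assms, of p q] by (simp add: q_def)
  then obtain u where u: "u \<in> A q" "p = q + \<gamma> *\<^sub>R u" by blast
  then have "(1 / \<gamma>) *\<^sub>R (p - q) = u" using \<open>\<gamma> > 0\<close> by simp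
  then show ?thesis using u(1) by (simp only: q_def[symmetric])
qed

lemma resolvent_firmly_nonexpansive:
  fixes A :: "'a::{real_inner,complete_space} \<Rightarrow> 'a set"
  assumes mm: "maximally_monotone A" and "\<gamma> > 0"
  defines "J \<equiv> resolvent (op_scale \<gamma> A)"
  shows "(norm (J p - J q))\<^sup>2 \<le> inner (J p - J q) (p - q)"
proof -
  have "0 \<le> inner (J p - J q) ((1 / \<gamma>) *\<^sub>R (p - J p) - (1 / \<gamma>) *\<^sub>R (q - J q))"
    using monotone_opD[OF maximally_monotoneD[OF mm] resolvent_mem[OF assms(1,2), of p]
        resolvent_mem[OF assms(1,2), of q]]
    unfolding J_def .
  also have "(1 / \<gamma>) *\<^sub>R (p - J p) - (1 / \<gamma>) *\<^sub>R (q - J q) = (1 / \<gamma>) *\<^sub>R ((p - q) - (J p - J q))"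
    by (simp add: algebra_simps)
  finally have "0 \<le> inner (J p - J q) ((p - q) - (J p - J q))"
    using \<open>\<gamma> > 0\<close> by (simp add: zero_le_divide_iff)
  then show ?thesis by (simp add: inner_diff_right power2_norm_eq_inner)
qed

lemma resolvent_nonexpansive:
  fixes A :: "'a::{real_inner,complete_space} \<Rightarrow> 'a set"
  assumes "maximally_monotone A" and "\<gamma> > 0"
  defines "J \<equiv> resolvent (op_scale \<gamma> A)"
  shows "norm (J p - J q) \<le> norm (p - q)"
proof -
  have "norm (J p - J q) * norm (J p - J q) \<le> norm (J p - J q) * norm (p - q)"
    using resolvent_firmly_nonexpansive[OF assms(1,2), of p q] norm_cauchy_schwarz[of "J p - J q" "p - q"]
    unfolding J_def by (simp add: power2_eq_square)
  then show ?thesis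
    using norm_ge_zero[of "J p - J q"] by (auto simp: mult_le_cancel_left)
qed

text \<open>With the slopes \<open>h\<^sub>i = (x - J\<^sub>\<gamma>\<^sub>i\<^sub>A (x - \<gamma>\<^sub>i w)) / \<gamma>\<^sub>i\<close>, monotonicity of \<open>A\<close> gives
  \<open>\<gamma>\<^sub>1 \<parallel>h\<^sub>1\<parallel>\<^sup>2 + \<gamma>\<^sub>2 \<parallel>h\<^sub>2\<parallel>\<^sup>2 \<le> (\<gamma>\<^sub>1 + \<gamma>\<^sub>2) \<parallel>h\<^sub>1\<parallel> \<parallel>h\<^sub>2\<parallel>\<close>.\<close>

lemma resolvent_step_norm_mono:
  fixes A :: "'a::{real_inner,complete_space} \<Rightarrow> 'a set"
  assumes mm: "maximally_monotone A" and "0 < \<gamma>\<^sub>1" "\<gamma>\<^sub>1 \<le> \<gamma>\<^sub>2"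
  shows "norm (x - resolvent (op_scale \<gamma>\<^sub>1 A) (x - \<gamma>\<^sub>1 *\<^sub>R w))
       \<le> norm (x - resolvent (op_scale \<gamma>\<^sub>2 A) (x - \<gamma>\<^sub>2 *\<^sub>R w))"
proof -
  have "0 < \<gamma>\<^sub>2" using assms by linarith
  define h where "h \<gamma> = (1 / \<gamma>) *\<^sub>R (x - resolvent (op_scale \<gamma> A) (x - \<gamma> *\<^sub>R w))" for \<gamma>
  have step: "x - resolvent (op_scale \<gamma> A) (x - \<gamma> *\<^sub>R w) = \<gamma> *\<^sub>R h \<gamma>" if "\<gamma> > 0" for \<gamma>
    using that by (simp add: h_def)
  have mem: "h \<gamma> - w \<in> A (x - \<gamma> *\<^sub>R h \<gamma>)" if "\<gamma> > 0" for \<gamma>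
    using resolvent_mem[OF mm that, of "x - \<gamma> *\<^sub>R w"] that
    by (simp add: step[OF that, symmetric] h_def algebra_simps)
  have "0 \<le> inner (\<gamma>\<^sub>2 *\<^sub>R h \<gamma>\<^sub>2 - \<gamma>\<^sub>1 *\<^sub>R h \<gamma>\<^sub>1) (h \<gamma>\<^sub>1 - h \<gamma>\<^sub>2)"
    using monotone_opD[OF maximally_monotoneD[OF mm] mem[OF \<open>0 < \<gamma>\<^sub>1\<close>] mem[OF \<open>0 < \<gamma>\<^sub>2\<close>]]
    by simp
  then have "\<gamma>\<^sub>1 * (norm (h \<gamma>\<^sub>1))\<^sup>2 + \<gamma>\<^sub>2 * (norm (h \<gamma>\<^sub>2))\<^sup>2 \<le> (\<gamma>\<^sub>1 + \<gamma>\<^sub>2) * inner (h \<gamma>\<^sub>1) (h \<gamma>\<^sub>2)"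
    by (simp add: power2_norm_eq_inner inner_commute algebra_simps)
  also have "\<dots> \<le> (\<gamma>\<^sub>1 + \<gamma>\<^sub>2) * (norm (h \<gamma>\<^sub>1) * norm (h \<gamma>\<^sub>2))"
    using assms \<open>0 < \<gamma>\<^sub>2\<close> by (intro mult_left_mono norm_cauchy_schwarz) auto
  finally have "0 \<le> (norm (h \<gamma>\<^sub>1) - norm (h \<gamma>\<^sub>2)) * (\<gamma>\<^sub>2 * norm (h \<gamma>\<^sub>2) - \<gamma>\<^sub>1 * norm (h \<gamma>\<^sub>1))"
    by (simp add: algebra_simps power2_eq_square)
  then have "\<gamma>\<^sub>1 * norm (h \<gamma>\<^sub>1) \<le> \<gamma>\<^sub>2 * norm (h \<gamma>\<^sub>2)"
  proof (rule contrapos_pp)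
    assume less: "\<not> \<gamma>\<^sub>1 * norm (h \<gamma>\<^sub>1) \<le> \<gamma>\<^sub>2 * norm (h \<gamma>\<^sub>2)"
    have "\<gamma>\<^sub>1 * norm (h \<gamma>\<^sub>2) \<le> \<gamma>\<^sub>2 * norm (h \<gamma>\<^sub>2)"
      using assms by (intro mult_right_mono) auto
    with less have "\<gamma>\<^sub>1 * norm (h \<gamma>\<^sub>2) < \<gamma>\<^sub>1 * norm (h \<gamma>\<^sub>1)" by linarith
    then have "norm (h \<gamma>\<^sub>2) < norm (h \<gamma>\<^sub>1)" using \<open>0 < \<gamma>\<^sub>1\<close> by simp
    with less show "\<not> 0 \<le> (norm (h \<gamma>\<^sub>1) - norm (h \<gamma>\<^sub>2)) * (\<gamma>\<^sub>2 * norm (h \<gamma>\<^sub>2) - \<gamma>\<^sub>1 * norm (h \<gamma>\<^sub>1))"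
      by (simp add: mult_pos_neg not_le)
  qed
  then show ?thesis using assms \<open>0 < \<gamma>\<^sub>2\<close> by (simp add: step)
qed

lemma mem_zer_op_plus_iff:
  fixes A :: "'a \<Rightarrow> 'b::ab_group_add set"
  shows "z \<in> zer (op_plus A B) \<longleftrightarrow> - B z \<in> A z"
proof -
  have "0 = u + B z \<longleftrightarrow> u = - B z" for u by (auto simp: eq_neg_iff_add_eq_0)
  then show ?thesis by (auto simp: zer_def op_plus_def image_iff)
qed

lemma resolvent_forward_fixed_point_iff:
  fixes A :: "'a::{real_inner,complete_space} \<Rightarrow> 'a set"
  assumes "maximally_monotone A" "\<gamma> > 0"
  shows "resolvent (op_scale \<gamma> A) (z - \<gamma> *\<^sub>R B z) = z \<longleftrightarrow> z \<in> zer (op_plus A B)"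
proof -
  have "z - \<gamma> *\<^sub>R B z = z + \<gamma> *\<^sub>R u \<longleftrightarrow> u = - B z" for u
    using \<open>\<gamma> > 0\<close> by (auto simp: algebra_simps eq_neg_iff_add_eq_0 simp flip: scaleR_add_right)
  then show ?thesis by (simp add: resolvent_eq_iff[OF assms] mem_zer_op_plus_iff)
qed

lemma cocoercive_forward_step_nonexpansive:
  assumes "cocoercive \<beta> B" "0 \<le> \<gamma>" "\<gamma> \<le> 2 * \<beta>"
  shows "norm ((p - \<gamma> *\<^sub>R B p) - (q - \<gamma> *\<^sub>R B q)) \<le> norm (p - q)"
proof -
  define d g where "d = p - q" and "g = B p - B q"
  have "(norm ((p - \<gamma> *\<^sub>R B p) - (q - \<gamma> *\<^sub>R B q)))\<^sup>2 = (norm d)\<^sup>2 - 2 * \<gamma> * inner d g + \<gamma>\<^sup>2 * (norm g)\<^sup>2"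
    unfolding d_def g_def power2_norm_eq_inner
    by (simp add: inner_diff_left inner_diff_right inner_commute algebra_simps power2_eq_square)
  moreover have "\<gamma> * (\<gamma> * (norm g)\<^sup>2) \<le> \<gamma> * (2 * (\<beta> * (norm g)\<^sup>2))"
    using assms(2) mult_right_mono[OF assms(3), of "(norm g)\<^sup>2"] by (intro mult_left_mono) auto
  moreover have "\<gamma> * (\<beta> * (norm g)\<^sup>2) \<le> \<gamma> * inner d g"
    using assms(1,2) by (intro mult_left_mono) (auto simp: cocoercive_def d_def g_def)
  ultimately have "(norm ((p - \<gamma> *\<^sub>R B p) - (q - \<gamma> *\<^sub>R B q)))\<^sup>2 \<le> (norm d)\<^sup>2"
    by (simp add: power2_eq_square algebra_simps)
  then show ?thesis unfolding d_def by (rule power2_le_imp_le) simp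
qed

text \<open>One relaxed forward-backward step \<open>(1 - l) d + l e\<close>, written relative to a zero \<open>z\<close>:
  \<open>d = x - z\<close>, \<open>e = J(x - \<gamma> B x) - z\<close>, \<open>g = B x - B z\<close>. The cross term \<open>\<langle>e - d, g\<rangle>\<close> is absorbed by
  Young's inequality with weight \<open>\<mu>\<close>.\<close>

lemma relaxed_step_estimate:
  fixes d e g :: "'a::real_inner"
  assumes firm: "(norm e)\<^sup>2 \<le> inner e (d - \<gamma> *\<^sub>R g)"
    and coco: "\<beta> * (norm g)\<^sup>2 \<le> inner d g"
    and "0 \<le> \<gamma>" "0 \<le> l" "0 < \<mu>"
  shows "(norm ((1 - l) *\<^sub>R d + l *\<^sub>R e))\<^sup>2 \<le> (norm d)\<^sup>2
    - l * (2 - l - \<mu>) * (norm (e - d))\<^sup>2 - l * (2 * \<gamma> * \<beta> - \<gamma>\<^sup>2 / \<mu>) * (norm g)\<^sup>2"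
proof -
  define r where "r = inner (e - d) g"
  have Q: "(norm ((1 - l) *\<^sub>R d + l *\<^sub>R e))\<^sup>2
      = (1 - l) * (norm d)\<^sup>2 + l * (norm e)\<^sup>2 - l * (1 - l) * (norm (e - d))\<^sup>2"
    using norm_convex_combination_power2[of l d e] by (simp add: norm_minus_commute)
  have "(norm e)\<^sup>2 \<le> (norm d)\<^sup>2 - (norm (e - d))\<^sup>2 - 2 * \<gamma> * \<beta> * (norm g)\<^sup>2 - 2 * \<gamma> * r"
  proof -
    have "\<gamma> * (\<beta> * (norm g)\<^sup>2) \<le> \<gamma> * inner d g" using coco \<open>0 \<le> \<gamma>\<close> by (rule mult_left_mono)
    moreover have "inner e (d - \<gamma> *\<^sub>R g) = inner d e - \<gamma> * inner d g - \<gamma> * r"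
      by (simp add: r_def inner_diff_left inner_diff_right inner_commute algebra_simps)
    moreover have "(norm (e - d))\<^sup>2 = (norm e)\<^sup>2 + (norm d)\<^sup>2 - 2 * inner d e"
      by (simp add: power2_norm_eq_inner inner_diff_left inner_diff_right inner_commute)
    ultimately show ?thesis using firm by (simp add: algebra_simps)
  qed
  then have E: "l * (norm e)\<^sup>2
      \<le> l * ((norm d)\<^sup>2 - (norm (e - d))\<^sup>2 - 2 * \<gamma> * \<beta> * (norm g)\<^sup>2 - 2 * \<gamma> * r)"
    using \<open>0 \<le> l\<close> by (rule mult_left_mono)
  have "(norm (\<mu> *\<^sub>R (e - d) + \<gamma> *\<^sub>R g))\<^sup>2
      = \<mu>\<^sup>2 * (norm (e - d))\<^sup>2 + 2 * \<mu> * \<gamma> * r + \<gamma>\<^sup>2 * (norm g)\<^sup>2"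
    unfolding r_def power2_norm_eq_inner
    by (simp add: inner_add_left inner_add_right inner_diff_left inner_diff_right inner_commute
        algebra_simps power2_eq_square)
  then have "0 \<le> \<mu> * (norm (e - d))\<^sup>2 + 2 * \<gamma> * r + \<gamma>\<^sup>2 / \<mu> * (norm g)\<^sup>2"
    using \<open>0 < \<mu>\<close> zero_le_power2[of "norm (\<mu> *\<^sub>R (e - d) + \<gamma> *\<^sub>R g)"]
    by (simp add: field_simps power2_eq_square)
  then have "l * (- 2 * \<gamma> * r) \<le> l * (\<mu> * (norm (e - d))\<^sup>2 + \<gamma>\<^sup>2 / \<mu> * (norm g)\<^sup>2)"
    using \<open>0 \<le> l\<close> by (intro mult_left_mono) auto
  with Q E show ?thesis by (simp add: algebra_simps)
qed

lemma relaxed_step_coefficients: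
  fixes \<beta> \<epsilon> \<gamma> l :: real
  assumes "0 < \<beta>" "0 < \<epsilon>" "\<epsilon> \<le> 1" "\<epsilon> \<le> \<gamma>" "\<gamma> \<le> 2 * \<beta>"
    and "\<epsilon> \<le> l" "l \<le> (1 - \<epsilon>) * (2 + \<epsilon> - \<gamma> / (2 * \<beta>))"
  defines "\<mu> \<equiv> \<gamma> / (2 * \<beta>) + \<epsilon>\<^sup>2 / 2"
  shows "\<epsilon> ^ 3 / 2 \<le> l * (2 - l - \<mu>)" and "\<beta> * \<epsilon> ^ 4 / 2 \<le> l * (2 * \<gamma> * \<beta> - \<gamma>\<^sup>2 / \<mu>)"
proof -
  have ratio: "0 \<le> \<gamma> / (2 * \<beta>)" "\<gamma> / (2 * \<beta>) \<le> 1" using assms by auto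
  have "\<mu> > 0" using assms ratio by (simp add: \<mu>_def add_nonneg_pos)
  have "(1 - \<epsilon>) * (2 + \<epsilon> - \<gamma> / (2 * \<beta>)) = 2 - \<epsilon> - \<epsilon>\<^sup>2 - \<gamma> / (2 * \<beta>) + \<epsilon> * (\<gamma> / (2 * \<beta>))"
    by (simp only: algebra_simps power2_eq_square)
  then have "l \<le> 2 - \<epsilon> - \<epsilon>\<^sup>2 - \<gamma> / (2 * \<beta>) + \<epsilon> * (\<gamma> / (2 * \<beta>))"
    using assms(7) by linarith
  moreover have "\<epsilon> * (\<gamma> / (2 * \<beta>)) \<le> \<epsilon>" using mult_left_le[OF ratio(2), of \<epsilon>] \<open>0 < \<epsilon>\<close> by simp
  ultimately have "\<epsilon>\<^sup>2 / 2 \<le> 2 - l - \<mu>" by (simp add: \<mu>_def)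
  then have "\<epsilon> * (\<epsilon>\<^sup>2 / 2) \<le> l * (2 - l - \<mu>)" using assms by (intro mult_mono) auto
  then show "\<epsilon> ^ 3 / 2 \<le> l * (2 - l - \<mu>)" by (simp add: power2_eq_square power3_eq_cube)
  have "\<mu> * (2 * \<beta> - \<beta> * \<epsilon>\<^sup>2 / 2) = \<gamma> + \<epsilon>\<^sup>2 * (\<beta> - \<gamma> / 4 - \<beta> * \<epsilon>\<^sup>2 / 4)"
    using \<open>0 < \<beta>\<close> by (simp add: \<mu>_def field_simps power2_eq_square)
  moreover have "0 \<le> \<beta> - \<gamma> / 4 - \<beta> * \<epsilon>\<^sup>2 / 4"
  proof -
    have "\<beta> * \<epsilon>\<^sup>2 \<le> \<beta>" using assms by (simp add: power_le_one mult_left_le)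
    with assms show ?thesis by linarith
  qed
  ultimately have "\<gamma> \<le> \<mu> * (2 * \<beta> - \<beta> * \<epsilon>\<^sup>2 / 2)" by simp
  then have "\<beta> * \<epsilon>\<^sup>2 / 2 \<le> 2 * \<beta> - \<gamma> / \<mu>" using \<open>\<mu> > 0\<close> by (simp add: field_simps)
  then have "\<epsilon> * (\<beta> * \<epsilon>\<^sup>2 / 2) \<le> \<gamma> * (2 * \<beta> - \<gamma> / \<mu>)"
    by (rule mult_mono[OF assms(4)]) (use assms(1,2,4) in auto)
  then have "\<epsilon> * (\<epsilon> * (\<beta> * \<epsilon>\<^sup>2 / 2)) \<le> l * (\<gamma> * (2 * \<beta> - \<gamma> / \<mu>))"
    by (rule mult_mono[OF assms(6)]) (use assms(1,2,6) in auto)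
  then show "\<beta> * \<epsilon> ^ 4 / 2 \<le> l * (2 * \<gamma> * \<beta> - \<gamma>\<^sup>2 / \<mu>)"
    by (simp add: power2_eq_square power4_eq_xxxx algebra_simps)
qed

section \<open>Quasi-Fejer monotone sequences\<close>

lemma quasi_fejer_bounded:
  fixes a e :: "nat \<Rightarrow> real"
  assumes step: "\<And>n. a (Suc n) \<le> a n + e n" and "summable e" "\<And>n. 0 \<le> e n"
  shows "a n \<le> a 0 + suminf e"
proof -
  have "a n \<le> a 0 + (\<Sum>k<n. e k)"
  proof (induction n)
    case (Suc n) then show ?case using step[of n] by simp
  qed simp
  moreover have "(\<Sum>k<n. e k) \<le> suminf e" using assms by (intro sum_le_suminf) auto
  ultimately show ?thesis by linarith
qed

lemma quasi_fejer_convergent: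
  fixes a e :: "nat \<Rightarrow> real"
  assumes "\<And>n. 0 \<le> a n" and step: "\<And>n. a (Suc n) \<le> a n + e n" and "summable e" "\<And>n. 0 \<le> e n"
  shows "convergent a"
proof -
  define b where "b n = a n - (\<Sum>k<n. e k)" for n
  have "decseq b" unfolding decseq_Suc_iff b_def using step by (simp add: algebra_simps)
  moreover have "- suminf e \<le> b n" for n
    using sum_le_suminf[of e "{..<n}"] assms(1)[of n] assms(3,4) by (auto simp: b_def)
  ultimately obtain L where "b \<longlonglongrightarrow> L" using decseq_convergent by blast
  then have "(\<lambda>n. b n + (\<Sum>k<n. e k)) \<longlonglongrightarrow> L + suminf e"
    using summable_LIMSEQ[OF \<open>summable e\<close>] by (rule tendsto_add)
  then show ?thesis by (auto simp: b_def convergent_def)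
qed

lemma summable_of_telescoping_bound:
  fixes a e f :: "nat \<Rightarrow> real"
  assumes "\<And>n. 0 \<le> f n" "\<And>n. 0 \<le> a n" and step: "\<And>n. f n \<le> a n - a (Suc n) + e n"
    and "summable e" "\<And>n. 0 \<le> e n"
  shows "summable f"
proof (rule summableI_nonneg_bounded[where x = "a 0 + suminf e"])
  fix n
  have "(\<Sum>k<n. f k) \<le> (\<Sum>k<n. a k - a (Suc k) + e k)" using step by (intro sum_mono) auto
  also have "\<dots> = a 0 - a n + (\<Sum>k<n. e k)" by (simp add: sum.distrib sum_lessThan_telescope')
  also have "(\<Sum>k<n. e k) \<le> suminf e" using assms by (intro sum_le_suminf) auto
  finally show "(\<Sum>k<n. f k) \<le> a 0 + suminf e" using assms(2)[of n] by linarith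
qed (use assms in auto)

lemma summable_power2_of_summable_nonneg:
  fixes e :: "nat \<Rightarrow> real"
  assumes "summable e" "\<And>n. 0 \<le> e n"
  shows "summable (\<lambda>n. (e n)\<^sup>2)"
proof (rule summable_comparison_test'[where g = "\<lambda>n. suminf e * e n" and N = 0])
  show "summable (\<lambda>n. suminf e * e n)" using assms(1) by (rule summable_mult)
  fix n
  have "e n \<le> suminf e" using sum_le_suminf[OF assms(1), of "{n}"] assms(2) by auto
  then show "norm ((e n)\<^sup>2) \<le> suminf e * e n"
    using assms(2)[of n] by (simp add: power2_eq_square mult_right_mono)
qed

lemma tendsto_zero_of_summable_norm_power2:
  fixes r :: "nat \<Rightarrow> 'a::real_normed_vector"
  assumes "summable (\<lambda>n. (norm (r n))\<^sup>2)"
  shows "r \<longlonglongrightarrow> 0"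
proof -
  have "(\<lambda>n. sqrt ((norm (r n))\<^sup>2)) \<longlonglongrightarrow> sqrt 0"
    using summable_LIMSEQ_zero[OF assms] by (intro tendsto_intros)
  then show ?thesis by (simp add: tendsto_norm_zero_iff)
qed

lemma convergent_of_summable_norm_diff:
  fixes x :: "nat \<Rightarrow> 'a::{real_normed_vector,complete_space}"
  assumes "summable (\<lambda>n. norm (x (Suc n) - x n))"
  shows "convergent x"
proof -
  define S where "S m = (\<Sum>k<m. norm (x (Suc k) - x k))" for m
  have "Cauchy S" unfolding S_def using summable_LIMSEQ[OF assms] by (rule LIMSEQ_imp_Cauchy)
  have est: "dist (x m) (x n) \<le> dist (S m) (S n)" if "n \<le> m" for m n
  proof -
    have "dist (x m) (x n) = norm (\<Sum>k = n..<m. x (Suc k) - x k)"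
      using sum_Suc_diff'[OF that, of x] by (simp add: dist_norm)
    also have "\<dots> \<le> (\<Sum>k = n..<m. norm (x (Suc k) - x k))" by (rule norm_sum)
    also have "\<dots> = S m - S n"
      unfolding S_def using sum.atLeastLessThan_concat[OF _ that, of 0 "\<lambda>k. norm (x (Suc k) - x k)"]
      by (simp add: lessThan_atLeast0)
    finally show ?thesis by (simp add: dist_real_def)
  qed
  have "Cauchy x"
  proof (rule CauchyI')
    fix \<eta> :: real assume "\<eta> > 0"
    then obtain N where N: "\<And>m n. m \<ge> N \<Longrightarrow> n \<ge> N \<Longrightarrow> dist (S m) (S n) < \<eta>"
      using \<open>Cauchy S\<close> unfolding Cauchy_def by blast
    show "\<exists>M. \<forall>m\<ge>M. \<forall>n>m. dist (x m) (x n) < \<eta>"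
      using est N by (metis dist_commute less_imp_le order.strict_trans1)
  qed
  then show ?thesis by (rule Cauchy_convergent)
qed

text \<open>Test the hypothesis at the point of the ball opposite to the direction of \<open>q - p\<close>.\<close>

lemma step_le_of_ball_fejer:
  fixes p q w0 :: "'a::real_inner"
  assumes "0 \<le> \<rho>" and ball: "\<And>w. norm (w - w0) \<le> \<rho> \<Longrightarrow> (norm (q - w))\<^sup>2 \<le> (norm (p - w))\<^sup>2 + c"
  shows "2 * \<rho> * norm (q - p) \<le> (norm (p - w0))\<^sup>2 - (norm (q - w0))\<^sup>2 + c"
proof (cases "q = p")
  case True
  then show ?thesis using ball[of w0] assms(1) by simp
next
  case False
  define u where "u = (1 / norm (q - p)) *\<^sub>R (q - p)"
  have "norm u = 1" using False by (simp add: u_def)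
  have sq: "(norm (v - (w0 - \<rho> *\<^sub>R u)))\<^sup>2 = (norm (v - w0))\<^sup>2 + 2 * \<rho> * inner (v - w0) u + \<rho>\<^sup>2" for v
  proof -
    have "(norm ((v - w0) + \<rho> *\<^sub>R u))\<^sup>2 = (norm (v - w0))\<^sup>2 + 2 * \<rho> * inner (v - w0) u + \<rho>\<^sup>2 * (norm u)\<^sup>2"
      unfolding power2_norm_eq_inner by (simp add: inner_add_left inner_add_right inner_commute
        algebra_simps power2_eq_square)
    then show ?thesis using \<open>norm u = 1\<close> by (simp add: algebra_simps)
  qed
  have "inner (q - w0) u - inner (p - w0) u = inner (q - p) u" by (simp add: inner_diff_left)
  also have "\<dots> = norm (q - p)" using False by (simp add: u_def dot_square_norm power2_eq_square)
  finally have "inner (q - w0) u - inner (p - w0) u = norm (q - p)" .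
  moreover have "(norm (q - (w0 - \<rho> *\<^sub>R u)))\<^sup>2 \<le> (norm (p - (w0 - \<rho> *\<^sub>R u)))\<^sup>2 + c"
    using \<open>norm u = 1\<close> \<open>0 \<le> \<rho>\<close> by (intro ball) simp
  ultimately show ?thesis unfolding sq by (simp add: algebra_simps)
qed

lemma quasi_fejer_interior_convergent:
  fixes x :: "nat \<Rightarrow> 'a::{real_inner,complete_space}"
  assumes "interior Z \<noteq> {}"
    and fejer: "\<And>z n. z \<in> Z \<Longrightarrow> norm (x (Suc n) - z) \<le> norm (x n - z) + e n"
    and "summable e" "\<And>n. 0 \<le> e n"
  shows "convergent x"
proof -
  obtain w0 \<rho> where "\<rho> > 0" "cball w0 \<rho> \<subseteq> Z"
    using assms(1) by (metis all_not_in_conv mem_interior_cball)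
  then have ballZ: "w \<in> Z" if "norm (w - w0) \<le> \<rho>" for w using that by (auto simp: dist_norm norm_minus_commute)
  define M where "M = norm (x 0 - w0) + suminf e + \<rho>"
  have M: "norm (x n - w) \<le> M" if "norm (w - w0) \<le> \<rho>" for n w
  proof -
    have "norm (x n - w0) \<le> norm (x 0 - w0) + suminf e"
      using fejer[OF ballZ] \<open>\<rho> > 0\<close> assms(3,4) by (intro quasi_fejer_bounded) auto
    then show ?thesis
      using norm_triangle_ineq[of "x n - w0" "w0 - w"] that by (simp add: M_def norm_minus_commute)
  qed
  have step: "2 * \<rho> * norm (x (Suc n) - x n)
      \<le> (norm (x n - w0))\<^sup>2 - (norm (x (Suc n) - w0))\<^sup>2 + (2 * M * e n + (e n)\<^sup>2)" for n
  proof (rule step_le_of_ball_fejer)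
    fix w assume w: "norm (w - w0) \<le> \<rho>"
    have "(norm (x (Suc n) - w))\<^sup>2 \<le> (norm (x n - w) + e n)\<^sup>2"
      using fejer[OF ballZ[OF w]] by (intro power_mono) auto
    also have "\<dots> \<le> (norm (x n - w))\<^sup>2 + (2 * M * e n + (e n)\<^sup>2)"
      using M[OF w, of n] assms(4)[of n] by (simp add: power2_sum mult_right_mono)
    finally show "(norm (x (Suc n) - w))\<^sup>2 \<le> (norm (x n - w))\<^sup>2 + (2 * M * e n + (e n)\<^sup>2)" .
  qed (use \<open>\<rho> > 0\<close> in simp)
  have "norm (x 0 - w0) \<le> M" using M[of w0 0] \<open>\<rho> > 0\<close> by simp
  then have "M \<ge> 0" using norm_ge_zero order_trans by blast
  have err: "summable (\<lambda>n. 2 * M * e n + (e n)\<^sup>2)"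
    using assms(3) summable_power2_of_summable_nonneg[OF assms(3,4)] by (intro summable_add summable_mult)
  have "summable (\<lambda>n. 2 * \<rho> * norm (x (Suc n) - x n))"
    by (rule summable_of_telescoping_bound[OF _ _ step err])
      (use \<open>\<rho> > 0\<close> \<open>M \<ge> 0\<close> assms(4) in auto)
  then have "summable (\<lambda>n. 1 / (2 * \<rho>) * (2 * \<rho> * norm (x (Suc n) - x n)))" by (rule summable_mult)
  then have "summable (\<lambda>n. norm (x (Suc n) - x n))" using \<open>\<rho> > 0\<close> by simp
  then show ?thesis by (rule convergent_of_summable_norm_diff)
qed

section \<open>Asymptotic centres and Opial's lemma\<close>

text \<open>The limit superior of a real sequence, meaningful for sequences bounded above (otherwise the
  set of eventual upper bounds is empty).\<close>

definition upper_limit :: "(nat \<Rightarrow> real) \<Rightarrow> real" where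
  "upper_limit f = Inf {M. \<forall>\<^sub>F n in sequentially. f n \<le> M}"

lemma upper_limit_le:
  assumes "\<And>n. 0 \<le> f n" "\<forall>\<^sub>F n in sequentially. f n \<le> M"
  shows "upper_limit f \<le> M"
proof -
  have "0 \<le> M'" if "\<forall>\<^sub>F n in sequentially. f n \<le> M'" for M'
  proof -
    from that obtain N where "\<forall>n\<ge>N. f n \<le> M'" by (auto simp: eventually_sequentially)
    then show ?thesis using assms(1)[of N] by force
  qed
  then have "bdd_below {M. \<forall>\<^sub>F n in sequentially. f n \<le> M}" by (intro bdd_belowI) auto
  then show ?thesis unfolding upper_limit_def using assms(2) by (intro cInf_lower) auto
qed

lemma upper_limit_le_epsilon:
  assumes "\<And>n. 0 \<le> f n" "\<And>\<delta>. \<delta> > 0 \<Longrightarrow> \<forall>\<^sub>F n in sequentially. f n \<le> M + \<delta>"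
  shows "upper_limit f \<le> M"
  by (rule field_le_epsilon, rule upper_limit_le) (use assms in auto)

lemma eventually_le_upper_limit:
  assumes "bdd_above (range f)" "\<delta> > 0"
  shows "\<forall>\<^sub>F n in sequentially. f n \<le> upper_limit f + \<delta>"
proof -
  obtain K where "\<And>n. f n \<le> K" using assms(1) by (auto simp: bdd_above_def)
  then have "{M. \<forall>\<^sub>F n in sequentially. f n \<le> M} \<noteq> {}" by (auto intro!: exI[of _ K])
  moreover have "Inf {M. \<forall>\<^sub>F n in sequentially. f n \<le> M} < upper_limit f + \<delta>"
    using assms(2) by (simp add: upper_limit_def)
  ultimately have "\<exists>M\<in>{M. \<forall>\<^sub>F n in sequentially. f n \<le> M}. M < upper_limit f + \<delta>"
    by (rule cInf_lessD)
  then obtain M where M: "\<forall>\<^sub>F n in sequentially. f n \<le> M" "M < upper_limit f + \<delta>" by blast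
  show ?thesis by (rule eventually_mono[OF M(1)]) (use M(2) in linarith)
qed

lemma upper_limit_nonneg:
  assumes "\<And>n. 0 \<le> f n" "bdd_above (range f)"
  shows "0 \<le> upper_limit f"
proof (rule field_le_epsilon)
  fix \<delta> :: real assume "\<delta> > 0"
  then obtain n where "f n \<le> upper_limit f + \<delta>"
    using eventually_happens'[OF sequentially_bot eventually_le_upper_limit[OF assms(2)]] by blast
  then show "0 \<le> upper_limit f + \<delta>" using assms(1)[of n] by linarith
qed

lemma upper_limit_le_combination:
  assumes "\<And>n. 0 \<le> f n" "bdd_above (range g)" "bdd_above (range h)" "0 \<le> a" "0 \<le> b"
    and "\<forall>\<^sub>F n in sequentially. f n \<le> a * g n + b * h n + c"
  shows "upper_limit f \<le> a * upper_limit g + b * upper_limit h + c"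
proof (rule upper_limit_le_epsilon[OF assms(1)])
  fix \<delta> :: real assume "\<delta> > 0"
  define \<eta> where "\<eta> = \<delta> / (a + b + 1)"
  have "\<eta> > 0" using \<open>\<delta> > 0\<close> assms by (simp add: \<eta>_def)
  have "(a + b) * \<eta> \<le> \<delta>"
    using \<open>\<delta> > 0\<close> assms by (simp add: \<eta>_def field_simps)
  show "\<forall>\<^sub>F n in sequentially. f n \<le> a * upper_limit g + b * upper_limit h + c + \<delta>"
    using eventually_le_upper_limit[OF assms(2) \<open>\<eta> > 0\<close>] eventually_le_upper_limit[OF assms(3) \<open>\<eta> > 0\<close>]
      assms(6)
  proof eventually_elim
    case (elim n)
    have "a * g n \<le> a * (upper_limit g + \<eta>)" "b * h n \<le> b * (upper_limit h + \<eta>)"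
      using elim assms by (auto intro: mult_left_mono)
    then show ?case using elim \<open>(a + b) * \<eta> \<le> \<delta>\<close> by (simp add: algebra_simps)
  qed
qed

lemma upper_limit_eq_lim:
  assumes "\<And>n. 0 \<le> f n" "f \<longlonglongrightarrow> l"
  shows "upper_limit f = l"
proof (rule antisym)
  show "upper_limit f \<le> l"
  proof (rule upper_limit_le_epsilon[OF assms(1)])
    fix \<delta> :: real assume "\<delta> > 0"
    with assms(2) show "\<forall>\<^sub>F n in sequentially. f n \<le> l + \<delta>"
      by (auto simp: dist_real_def tendsto_iff elim!: allE[of _ \<delta>] eventually_mono)
  qed
  have "bdd_above (range f)" by (rule bounded_imp_bdd_above[OF convergent_imp_bounded[OF assms(2)]])
  show "l \<le> upper_limit f"
  proof (rule field_le_epsilon)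
    fix \<delta> :: real assume "\<delta> > 0"
    have "\<forall>\<^sub>F n in sequentially. f n \<le> upper_limit f + \<delta>"
      using eventually_le_upper_limit[OF \<open>bdd_above (range f)\<close> \<open>\<delta> > 0\<close>] .
    then show "l \<le> upper_limit f + \<delta>"
      using assms(2) by (intro tendsto_upperbound) auto
  qed
qed

definition asymptotic_sqdist :: "(nat \<Rightarrow> 'a::real_normed_vector) \<Rightarrow> 'a \<Rightarrow> real" where
  "asymptotic_sqdist w p = upper_limit (\<lambda>k. (norm (w k - p))\<^sup>2)"

lemma bdd_above_norm_diff_power2:
  fixes w :: "nat \<Rightarrow> 'a::real_normed_vector"
  assumes "\<And>k. norm (w k) \<le> K"
  shows "bdd_above (range (\<lambda>k. (norm (w k - p))\<^sup>2))"
proof (rule bdd_aboveI2)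
  fix k
  have "norm (w k - p) \<le> K + norm p" using norm_triangle_ineq4[of "w k" p] assms[of k] by linarith
  then show "(norm (w k - p))\<^sup>2 \<le> (K + norm p)\<^sup>2" by (intro power_mono) auto
qed

lemma asymptotic_sqdist_nonneg:
  assumes "\<And>k. norm (w k) \<le> K"
  shows "0 \<le> asymptotic_sqdist w p"
  unfolding asymptotic_sqdist_def
  by (rule upper_limit_nonneg[OF _ bdd_above_norm_diff_power2[OF assms]]) simp

lemma asymptotic_sqdist_midpoint:
  fixes w :: "nat \<Rightarrow> 'a::real_inner"
  assumes "\<And>k. norm (w k) \<le> K"
  shows "asymptotic_sqdist w ((1/2) *\<^sub>R (p + q))
    \<le> (1/2) * asymptotic_sqdist w p + (1/2) * asymptotic_sqdist w q + - ((norm (p - q))\<^sup>2 / 4)"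
  unfolding asymptotic_sqdist_def
proof (rule upper_limit_le_combination[OF _ bdd_above_norm_diff_power2[OF assms]
      bdd_above_norm_diff_power2[OF assms]])
  show "\<forall>\<^sub>F k in sequentially. (norm (w k - (1/2) *\<^sub>R (p + q)))\<^sup>2
      \<le> 1/2 * (norm (w k - p))\<^sup>2 + 1/2 * (norm (w k - q))\<^sup>2 + - ((norm (p - q))\<^sup>2 / 4)"
  proof (rule always_eventually, rule allI)
    fix k
    have "w k - (1/2) *\<^sub>R (p + q) = (1 - 1/2) *\<^sub>R (w k - p) + (1/2) *\<^sub>R (w k - q)"
      by (simp add: algebra_simps flip: scaleR_add_left)
    moreover have "norm ((w k - p) - (w k - q)) = norm (p - q)" by (simp add: norm_minus_commute)
    ultimately show "(norm (w k - (1/2) *\<^sub>R (p + q)))\<^sup>2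
        \<le> 1/2 * (norm (w k - p))\<^sup>2 + 1/2 * (norm (w k - q))\<^sup>2 + - ((norm (p - q))\<^sup>2 / 4)"
      using norm_convex_combination_power2[of "1/2" "w k - p" "w k - q"] by simp
  qed
qed simp_all

lemma asymptotic_sqdist_le_plus:
  fixes w :: "nat \<Rightarrow> 'a::real_normed_vector"
  assumes "\<And>k. norm (w k) \<le> K" "0 \<le> d"
    and "\<forall>\<^sub>F k in sequentially. norm (w k - p) \<le> norm (w k - q) + d"
  shows "asymptotic_sqdist w p \<le> asymptotic_sqdist w q + (2 * d * (K + norm q) + d\<^sup>2)"
proof -
  define g where "g k = (norm (w k - q))\<^sup>2" for k
  have "(norm (w k - p))\<^sup>2 \<le> 1 * g k + 0 * g k + (2 * d * (K + norm q) + d\<^sup>2)"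
    if "norm (w k - p) \<le> norm (w k - q) + d" for k
  proof -
    have "(norm (w k - p))\<^sup>2 \<le> (norm (w k - q) + d)\<^sup>2" using that by (intro power_mono) auto
    also have "\<dots> = (norm (w k - q))\<^sup>2 + 2 * d * norm (w k - q) + d\<^sup>2" by (simp add: power2_sum)
    also have "norm (w k - q) \<le> K + norm q"
      using norm_triangle_ineq4[of "w k" q] assms(1)[of k] by linarith
    then have "2 * d * norm (w k - q) \<le> 2 * d * (K + norm q)" using assms(2) by (simp add: mult_left_mono)
    finally show ?thesis by (simp add: g_def)
  qed
  then have "\<forall>\<^sub>F k in sequentially. (norm (w k - p))\<^sup>2 \<le> 1 * g k + 0 * g k + (2 * d * (K + norm q) + d\<^sup>2)"
    using assms(3) by (auto elim: eventually_mono)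
  then have "upper_limit (\<lambda>k. (norm (w k - p))\<^sup>2)
      \<le> 1 * upper_limit g + 0 * upper_limit g + (2 * d * (K + norm q) + d\<^sup>2)"
    using bdd_above_norm_diff_power2[OF assms(1)] unfolding g_def
    by (intro upper_limit_le_combination) auto
  then show ?thesis by (simp add: asymptotic_sqdist_def g_def[abs_def])
qed

lemma asymptotic_center_exists:
  fixes w :: "nat \<Rightarrow> 'a::{real_inner,complete_space}"
  assumes bound: "\<And>k. norm (w k) \<le> K"
  shows "\<exists>c. \<forall>p. asymptotic_sqdist w c \<le> asymptotic_sqdist w p"
proof -
  define \<Phi> where "\<Phi> = asymptotic_sqdist w"
  define m where "m = Inf (range \<Phi>)"
  have m_le: "m \<le> \<Phi> p" for p
    unfolding m_def \<Phi>_def using asymptotic_sqdist_nonneg[OF bound]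
    by (intro cInf_lower bdd_belowI[of _ 0]) auto
  have "\<exists>p. \<Phi> p < m + 1 / (real j + 1)" for j
    using cInf_lessD[of "range \<Phi>" "m + 1 / (real j + 1)"] by (auto simp: m_def)
  then obtain P where P: "\<And>j. \<Phi> (P j) < m + 1 / (real j + 1)" by metis
  have "Cauchy P"
  proof (rule Cauchy_of_power2_bound[of _ 2])
    fix j k
    have "m \<le> \<Phi> ((1/2) *\<^sub>R (P j + P k))" by (rule m_le)
    also have "\<dots> \<le> (1/2) * \<Phi> (P j) + (1/2) * \<Phi> (P k) + - ((norm (P j - P k))\<^sup>2 / 4)"
      unfolding \<Phi>_def by (rule asymptotic_sqdist_midpoint[OF bound])
    finally show "(norm (P j - P k))\<^sup>2 \<le> 2 * (1 / (real j + 1) + 1 / (real k + 1))"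
      using P[of j] P[of k] by argo
  qed
  then obtain c where c: "P \<longlonglongrightarrow> c" using convergent_eq_Cauchy by blast
  have "(\<lambda>j. \<Phi> (P j)) \<longlonglongrightarrow> m"
  proof (rule tendsto_sandwich[OF _ _ tendsto_const])
    show "(\<lambda>n. m + 1 / (real n + 1)) \<longlonglongrightarrow> m"
      using LIMSEQ_inverse_real_of_nat_add[of m] by (simp add: inverse_eq_divide add.commute)
  qed (use P m_le in \<open>auto intro!: always_eventually less_imp_le\<close>)
  then have "(\<lambda>j. \<Phi> (P j) + (2 * norm (c - P j) * (K + norm (P j)) + (norm (c - P j))\<^sup>2))
      \<longlonglongrightarrow> m + (2 * norm (c - c) * (K + norm c) + (norm (c - c))\<^sup>2)"
    using c by (intro tendsto_intros)
  moreover have "\<Phi> c \<le> \<Phi> (P j) + (2 * norm (c - P j) * (K + norm (P j)) + (norm (c - P j))\<^sup>2)" for j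
    unfolding \<Phi>_def using norm_triangle_ineq[of "w _ - P j" "P j - c"]
    by (intro asymptotic_sqdist_le_plus[OF bound] always_eventually)
      (auto simp: norm_minus_commute algebra_simps)
  ultimately have "\<Phi> c \<le> m" by (intro tendsto_lowerbound) (auto intro: always_eventually)
  then show ?thesis using m_le unfolding \<Phi>_def by (meson order_trans)
qed

lemma asymptotic_center_fixed_point:
  fixes w :: "nat \<Rightarrow> 'a::real_inner" and T :: "'a \<Rightarrow> 'a"
  assumes bound: "\<And>k. norm (w k) \<le> K"
    and nonexp: "\<And>p q. norm (T p - T q) \<le> norm (p - q)"
    and regular: "(\<lambda>k. norm (w k - T (w k))) \<longlonglongrightarrow> 0"
    and center: "\<And>p. asymptotic_sqdist w c \<le> asymptotic_sqdist w p"
  shows "T c = c"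
proof -
  define \<Phi> where "\<Phi> = asymptotic_sqdist w"
  have near: "\<Phi> (T c) \<le> \<Phi> c + (2 * \<eta> * (K + norm c) + \<eta>\<^sup>2)" if "\<eta> > 0" for \<eta>
    unfolding \<Phi>_def
  proof (rule asymptotic_sqdist_le_plus[OF bound])
    show "\<forall>\<^sub>F k in sequentially. norm (w k - T c) \<le> norm (w k - c) + \<eta>"
      using order_tendstoD(2)[OF regular \<open>\<eta> > 0\<close>]
    proof eventually_elim
      case (elim k)
      have "norm (w k - T c) \<le> norm (w k - T (w k)) + norm (T (w k) - T c)"
        using norm_triangle_ineq[of "w k - T (w k)" "T (w k) - T c"] by simp
      then show ?case using elim nonexp[of "w k" c] by linarith
    qed
  qed (use \<open>\<eta> > 0\<close> in simp)
  have "\<forall>\<^sub>F n in sequentially. \<Phi> (T c) \<le> \<Phi> c + (2 * (1 / real n) * (K + norm c) + (1 / real n)\<^sup>2)"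
    using eventually_gt_at_top[of "0::nat"] by (rule eventually_mono) (rule near; simp)
  moreover have "(\<lambda>n. \<Phi> c + (2 * (1 / real n) * (K + norm c) + (1 / real n)\<^sup>2))
      \<longlonglongrightarrow> \<Phi> c + (2 * 0 * (K + norm c) + 0\<^sup>2)"
    by (intro tendsto_intros lim_1_over_n)
  ultimately have "\<Phi> (T c) \<le> \<Phi> c" by (simp add: tendsto_lowerbound)
  have "\<Phi> c \<le> \<Phi> ((1/2) *\<^sub>R (c + T c))" unfolding \<Phi>_def by (rule center)
  also have "\<dots> \<le> (1/2) * \<Phi> c + (1/2) * \<Phi> (T c) + - ((norm (c - T c))\<^sup>2 / 4)"
    unfolding \<Phi>_def by (rule asymptotic_sqdist_midpoint[OF bound])
  finally have "(norm (c - T c))\<^sup>2 \<le> 0" using \<open>\<Phi> (T c) \<le> \<Phi> c\<close> by argo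
  then show ?thesis by simp
qed

lemma asymptotic_sqdist_eq_lim:
  assumes "(\<lambda>k. norm (w k - p)) \<longlonglongrightarrow> L"
  shows "asymptotic_sqdist w p = L\<^sup>2"
  unfolding asymptotic_sqdist_def using assms by (intro upper_limit_eq_lim tendsto_intros) auto

lemma asymptotic_sqdist_lt_of_inner_tendsto:
  fixes w :: "nat \<Rightarrow> 'a::real_inner"
  assumes L: "(\<lambda>k. norm (w k - c)) \<longlonglongrightarrow> L"
    and \<delta>: "(\<lambda>k. inner (w k - c) y) \<longlonglongrightarrow> \<delta>" "\<delta> \<noteq> 0"
  shows "asymptotic_sqdist w (c + (\<delta> / (norm y)\<^sup>2) *\<^sub>R y) < L\<^sup>2"
proof -
  have "y \<noteq> 0"
  proof
    assume "y = 0"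
    then have "(\<lambda>k. inner (w k - c) y) \<longlonglongrightarrow> 0" by simp
    with \<delta> show False using LIMSEQ_unique by blast
  qed
  define t where "t = \<delta> / (norm y)\<^sup>2"
  have "(norm (w k - (c + t *\<^sub>R y)))\<^sup>2 = (norm (w k - c))\<^sup>2 - 2 * t * inner (w k - c) y + t\<^sup>2 * (norm y)\<^sup>2"
    for k unfolding power2_norm_eq_inner
    by (simp add: inner_diff_left inner_diff_right inner_commute algebra_simps power2_eq_square)
  then have "(\<lambda>k. (norm (w k - (c + t *\<^sub>R y)))\<^sup>2) \<longlonglongrightarrow> L\<^sup>2 - 2 * t * \<delta> + t\<^sup>2 * (norm y)\<^sup>2"
    using L \<delta>(1) by (simp only:) (intro tendsto_intros)
  moreover have "L\<^sup>2 - 2 * t * \<delta> + t\<^sup>2 * (norm y)\<^sup>2 = L\<^sup>2 - \<delta>\<^sup>2 / (norm y)\<^sup>2"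
    using \<open>y \<noteq> 0\<close> by (simp add: t_def field_simps power2_eq_square)
  ultimately have "asymptotic_sqdist w (c + t *\<^sub>R y) = L\<^sup>2 - \<delta>\<^sup>2 / (norm y)\<^sup>2"
    unfolding asymptotic_sqdist_def by (intro upper_limit_eq_lim) auto
  moreover have "\<delta>\<^sup>2 / (norm y)\<^sup>2 > 0" using \<delta>(2) \<open>y \<noteq> 0\<close> by simp
  ultimately show ?thesis by (simp add: t_def)
qed

lemma not_weak_conv_imp_subseq:
  fixes x :: "nat \<Rightarrow> 'a::real_inner"
  assumes bound: "\<And>n. norm (x n) \<le> K" and "\<not> weak_conv x c"
  obtains y \<delta> \<rho> where "strict_mono \<rho>" "(\<lambda>k. inner (x (\<rho> k) - c) y) \<longlonglongrightarrow> \<delta>" "\<delta> \<noteq> 0"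
proof -
  obtain y where y: "\<not> (\<lambda>n. inner (x n) y) \<longlonglongrightarrow> inner c y"
    using assms(2) by (auto simp: weak_conv_def)
  define s where "s n = inner (x n - c) y" for n
  have "\<not> s \<longlonglongrightarrow> 0"
  proof
    assume "s \<longlonglongrightarrow> 0"
    then have "(\<lambda>n. s n + inner c y) \<longlonglongrightarrow> 0 + inner c y" by (intro tendsto_intros)
    with y show False by (simp add: s_def inner_diff_left)
  qed
  then obtain \<epsilon> where "\<epsilon> > 0" and freq: "\<And>N. \<exists>n\<ge>N. \<epsilon> \<le> \<bar>s n\<bar>"
    unfolding LIMSEQ_iff by (auto simp: not_less)
  then have "infinite {n. \<epsilon> \<le> \<bar>s n\<bar>}" by (simp add: infinite_nat_iff_unbounded_le)
  then obtain r :: "nat \<Rightarrow> nat" where r: "strict_mono r" "\<And>n. \<epsilon> \<le> \<bar>s (r n)\<bar>"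
    using infinite_enumerate by blast
  have "\<bar>s n\<bar> \<le> (K + norm c) * norm y" for n
  proof -
    have "\<bar>s n\<bar> \<le> norm (x n - c) * norm y" unfolding s_def by (rule Cauchy_Schwarz_ineq2)
    also have "\<dots> \<le> (K + norm c) * norm y"
      using norm_triangle_ineq4[of "x n" c] bound[of n] by (intro mult_right_mono) auto
    finally show ?thesis .
  qed
  then have "bounded (range (s \<circ> r))" unfolding bounded_iff by auto
  then obtain \<delta> r' where r': "strict_mono r'" "(s \<circ> r \<circ> r') \<longlonglongrightarrow> \<delta>"
    using bounded_imp_convergent_subsequence by blast
  have "\<epsilon> \<le> \<bar>\<delta>\<bar>"
    using r(2) by (intro tendsto_lowerbound[OF tendsto_rabs[OF r'(2)]] always_eventually) auto
  then have "\<delta> \<noteq> 0" using \<open>\<epsilon> > 0\<close> by auto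
  moreover have "strict_mono (r \<circ> r')" using r(1) r'(1) by (rule strict_mono_o)
  ultimately show ?thesis using r'(2) that by (simp add: s_def o_def)
qed

text \<open>Opial's lemma via asymptotic centres: the asymptotic centre \<open>c\<close> of \<open>x\<close> is a fixed point of \<open>T\<close>.
  If \<open>\<langle>x\<^sub>n - c, y\<rangle>\<close> had a nonzero limit \<open>\<delta>\<close> along a subsequence \<open>w\<close>, the asymptotic centre \<open>c'\<close>
  of \<open>w\<close> would be a fixed point with \<open>lim \<parallel>x\<^sub>n - c'\<parallel>\<^sup>2 \<le> lim \<parallel>x\<^sub>n - c\<parallel>\<^sup>2 - \<delta>\<^sup>2/\<parallel>y\<parallel>\<^sup>2\<close>, since \<open>c'\<close> minimises the
  asymptotic distance of \<open>w\<close> and in particular beats \<open>c + (\<delta>/\<parallel>y\<parallel>\<^sup>2) y\<close>; this contradicts the minimality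
  of \<open>c\<close>.\<close>

theorem fejer_weak_conv_fixed_point:
  fixes x :: "nat \<Rightarrow> 'a::{real_inner,complete_space}" and T :: "'a \<Rightarrow> 'a"
  assumes bound: "\<And>n. norm (x n) \<le> K"
    and nonexp: "\<And>p q. norm (T p - T q) \<le> norm (p - q)"
    and regular: "(\<lambda>n. norm (x n - T (x n))) \<longlonglongrightarrow> 0"
    and fejer: "\<And>z. T z = z \<Longrightarrow> convergent (\<lambda>n. norm (x n - z))"
  shows "\<exists>c. T c = c \<and> weak_conv x c"
proof -
  obtain c where center: "\<And>p. asymptotic_sqdist x c \<le> asymptotic_sqdist x p"
    using asymptotic_center_exists[of x K, OF bound] by blast
  have Tc: "T c = c" by (rule asymptotic_center_fixed_point[of x K, OF bound nonexp regular center])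
  have "weak_conv x c"
  proof (rule ccontr)
    assume "\<not> weak_conv x c"
    then obtain y \<delta> \<rho> where \<rho>: "strict_mono \<rho>" and
      lim_inner: "(\<lambda>k. inner (x (\<rho> k) - c) y) \<longlonglongrightarrow> \<delta>" and "\<delta> \<noteq> 0"
      using not_weak_conv_imp_subseq[of x K, OF bound] by blast
    define w where "w = x \<circ> \<rho>"
    have bound_w: "\<And>k. norm (w k) \<le> K" using bound by (simp add: w_def)
    have "(\<lambda>k. norm (w k - T (w k))) \<longlonglongrightarrow> 0"
      using LIMSEQ_subseq_LIMSEQ[OF regular \<rho>] by (simp add: w_def o_def)
    then obtain c' where center': "\<And>p. asymptotic_sqdist w c' \<le> asymptotic_sqdist w p"
      and Tc': "T c' = c'"
      using asymptotic_center_exists[of w K, OF bound_w] asymptotic_center_fixed_point[of w K, OF bound_w nonexp]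
      by metis
    obtain L L' where L: "(\<lambda>n. norm (x n - c)) \<longlonglongrightarrow> L" and L': "(\<lambda>n. norm (x n - c')) \<longlonglongrightarrow> L'"
      using fejer[OF Tc] fejer[OF Tc'] by (auto simp: convergent_def)
    have "L\<^sup>2 \<le> L'\<^sup>2"
      using center[of c'] by (simp add: asymptotic_sqdist_eq_lim[OF L] asymptotic_sqdist_eq_lim[OF L'])
    have wL: "(\<lambda>k. norm (w k - c)) \<longlonglongrightarrow> L" and wL': "(\<lambda>k. norm (w k - c')) \<longlonglongrightarrow> L'"
      using LIMSEQ_subseq_LIMSEQ[OF L \<rho>] LIMSEQ_subseq_LIMSEQ[OF L' \<rho>] by (simp_all add: w_def o_def)
    have "(\<lambda>k. inner (w k - c) y) \<longlonglongrightarrow> \<delta>" using lim_inner by (simp add: w_def)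
    then have "asymptotic_sqdist w (c + (\<delta> / (norm y)\<^sup>2) *\<^sub>R y) < L\<^sup>2"
      using \<open>\<delta> \<noteq> 0\<close> by (rule asymptotic_sqdist_lt_of_inner_tendsto[OF wL])
    then have "L'\<^sup>2 < L\<^sup>2"
      using center'[of "c + (\<delta> / (norm y)\<^sup>2) *\<^sub>R y"] by (simp add: asymptotic_sqdist_eq_lim[OF wL'])
    with \<open>L\<^sup>2 \<le> L'\<^sup>2\<close> show False by linarith
  qed
  with Tc show ?thesis by blast
qed

section \<open>The forward-backward iteration\<close>

locale forward_backward_iteration =
  fixes A :: "'a::{real_inner, complete_space} \<Rightarrow> 'a set"
    and B :: "'a \<Rightarrow> 'a"
    and \<beta> \<epsilon> :: real
    and \<gamma> lam :: "nat \<Rightarrow> real"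
    and a b x :: "nat \<Rightarrow> 'a"
  assumes beta_pos: "0 < \<beta>"
    and eps: "0 < \<epsilon>" "\<epsilon> < min (1/2) \<beta>"
    and A_mm: "maximally_monotone A"
    and B_coco: "cocoercive \<beta> B"
    and gamma: "\<And>n. \<epsilon> \<le> \<gamma> n \<and> \<gamma> n \<le> 2 * \<beta> / (1 + \<epsilon>)"
    and a_sum: "summable (\<lambda>n. norm (a n))"
    and b_sum: "summable (\<lambda>n. norm (b n))"
    and zer_ne: "zer (op_plus A B) \<noteq> {}"
    and lambda: "\<And>n. \<epsilon> \<le> lam n \<and> lam n \<le> (1 - \<epsilon>) * (2 + \<epsilon> - \<gamma> n / (2 * \<beta>))"
    and x_rec: "\<And>n. x (Suc n) = x n + lam n *\<^sub>R
        (resolvent (op_scale (\<gamma> n) A) (x n - \<gamma> n *\<^sub>R (B (x n) + b n)) + a n - x n)"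
begin

lemma gamma_ge: "\<epsilon> \<le> \<gamma> n" and gamma_le: "\<gamma> n \<le> 2 * \<beta>" and gamma_pos: "0 < \<gamma> n"
proof -
  have "2 * \<beta> / (1 + \<epsilon>) \<le> 2 * \<beta>" using beta_pos eps by (simp add: divide_le_eq)
  then show "\<epsilon> \<le> \<gamma> n" "\<gamma> n \<le> 2 * \<beta>" "0 < \<gamma> n" using gamma[of n] eps by auto
qed

lemma lam_pos: "0 < lam n" and lam_le: "lam n \<le> 3"
proof -
  show "0 < lam n" using lambda[of n] eps by linarith
  have "0 \<le> \<gamma> n / (2 * \<beta>)" using gamma_pos[of n] beta_pos by simp
  moreover have "\<gamma> n / (2 * \<beta>) \<le> 1" using gamma_le[of n] beta_pos by simp
  then have "0 \<le> 2 + \<epsilon> - \<gamma> n / (2 * \<beta>)" using eps by linarith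
  then have "(1 - \<epsilon>) * (2 + \<epsilon> - \<gamma> n / (2 * \<beta>)) \<le> 2 + \<epsilon> - \<gamma> n / (2 * \<beta>)"
    using eps by (intro mult_left_le_one_le) auto
  ultimately show "lam n \<le> 3" using lambda[of n] eps by linarith
qed

definition residual :: "nat \<Rightarrow> 'a" where
  "residual n = resolvent (op_scale (\<gamma> n) A) (x n - \<gamma> n *\<^sub>R B (x n)) - x n"

definition perturbation :: "nat \<Rightarrow> real" where
  "perturbation n = lam n * (\<gamma> n * norm (b n) + norm (a n))"

lemma perturbation_nonneg: "0 \<le> perturbation n"
  using lam_pos[of n] gamma_pos[of n] by (simp add: perturbation_def)

lemma summable_perturbation: "summable perturbation"
proof (rule summable_comparison_test'[where N = 0])
  show "summable (\<lambda>n. 3 * (2 * \<beta> * norm (b n) + norm (a n)))"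
    using a_sum b_sum by (intro summable_mult summable_add)
  fix n
  have "\<gamma> n * norm (b n) \<le> 2 * \<beta> * norm (b n)" using gamma_le[of n] by (intro mult_right_mono) auto
  then have "perturbation n \<le> 3 * (2 * \<beta> * norm (b n) + norm (a n))"
    unfolding perturbation_def using lam_le[of n] lam_pos[of n] gamma_pos[of n] by (intro mult_mono) auto
  then show "norm (perturbation n) \<le> 3 * (2 * \<beta> * norm (b n) + norm (a n))"
    using perturbation_nonneg[of n] by simp
qed

lemma dist_exact_step_le: "norm (x (Suc n) - (x n + lam n *\<^sub>R residual n)) \<le> perturbation n"
proof -
  define J where "J = resolvent (op_scale (\<gamma> n) A)"
  have "x (Suc n) - (x n + lam n *\<^sub>R residual n)
      = lam n *\<^sub>R ((J (x n - \<gamma> n *\<^sub>R (B (x n) + b n)) - J (x n - \<gamma> n *\<^sub>R B (x n))) + a n)"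
    unfolding x_rec residual_def J_def by (simp add: algebra_simps)
  also have "norm \<dots> \<le> lam n * (norm (J (x n - \<gamma> n *\<^sub>R (B (x n) + b n)) - J (x n - \<gamma> n *\<^sub>R B (x n)))
      + norm (a n))"
    using lam_pos[of n] by (simp add: norm_triangle_ineq mult_left_mono)
  also have "\<dots> \<le> lam n * (\<gamma> n * norm (b n) + norm (a n))"
  proof -
    have "norm (J (x n - \<gamma> n *\<^sub>R (B (x n) + b n)) - J (x n - \<gamma> n *\<^sub>R B (x n)))
        \<le> norm ((x n - \<gamma> n *\<^sub>R (B (x n) + b n)) - (x n - \<gamma> n *\<^sub>R B (x n)))"
      unfolding J_def by (rule resolvent_nonexpansive[OF A_mm gamma_pos])
    also have "\<dots> = \<gamma> n * norm (b n)" using gamma_pos[of n] by (simp add: algebra_simps)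
    finally show ?thesis using lam_pos[of n] by (intro mult_left_mono) auto
  qed
  finally show ?thesis by (simp add: perturbation_def)
qed

lemma exact_step_estimate:
  assumes "z \<in> zer (op_plus A B)"
  shows "(norm (x n + lam n *\<^sub>R residual n - z))\<^sup>2 \<le> (norm (x n - z))\<^sup>2
    - \<epsilon> ^ 3 / 2 * (norm (residual n))\<^sup>2 - \<beta> * \<epsilon> ^ 4 / 2 * (norm (B (x n) - B z))\<^sup>2"
proof -
  define J where "J = resolvent (op_scale (\<gamma> n) A)"
  define d e g where "d = x n - z" and "e = J (x n - \<gamma> n *\<^sub>R B (x n)) - z" and "g = B (x n) - B z"
  define \<mu> where "\<mu> = \<gamma> n / (2 * \<beta>) + \<epsilon>\<^sup>2 / 2"
  have Jz: "J (z - \<gamma> n *\<^sub>R B z) = z"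
    using resolvent_forward_fixed_point_iff[OF A_mm gamma_pos] assms by (simp add: J_def)
  have "(norm e)\<^sup>2 \<le> inner e ((x n - \<gamma> n *\<^sub>R B (x n)) - (z - \<gamma> n *\<^sub>R B z))"
    using resolvent_firmly_nonexpansive[OF A_mm gamma_pos, of n "x n - \<gamma> n *\<^sub>R B (x n)" "z - \<gamma> n *\<^sub>R B z"]
    by (simp add: J_def[symmetric] Jz e_def)
  also have "(x n - \<gamma> n *\<^sub>R B (x n)) - (z - \<gamma> n *\<^sub>R B z) = d - \<gamma> n *\<^sub>R g"
    by (simp add: d_def g_def algebra_simps)
  finally have firm: "(norm e)\<^sup>2 \<le> inner e (d - \<gamma> n *\<^sub>R g)" .
  have coco: "\<beta> * (norm g)\<^sup>2 \<le> inner d g" using B_coco by (simp add: cocoercive_def d_def g_def)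
  have "\<mu> > 0" using gamma_pos[of n] beta_pos eps by (simp add: \<mu>_def add_pos_nonneg)
  have step: "(1 - lam n) *\<^sub>R d + lam n *\<^sub>R e = x n + lam n *\<^sub>R residual n - z"
    and res: "e - d = residual n"
    by (simp_all add: d_def e_def J_def residual_def algebra_simps)
  have "(norm (x n + lam n *\<^sub>R residual n - z))\<^sup>2 \<le> (norm d)\<^sup>2
      - lam n * (2 - lam n - \<mu>) * (norm (residual n))\<^sup>2
      - lam n * (2 * \<gamma> n * \<beta> - (\<gamma> n)\<^sup>2 / \<mu>) * (norm g)\<^sup>2"
    using relaxed_step_estimate[OF firm coco, of "lam n" \<mu>] gamma_pos[of n] lam_pos[of n] \<open>\<mu> > 0\<close>
    unfolding step res by auto
  moreover have c1: "\<epsilon> ^ 3 / 2 \<le> lam n * (2 - lam n - \<mu>)"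
    and c2: "\<beta> * \<epsilon> ^ 4 / 2 \<le> lam n * (2 * \<gamma> n * \<beta> - (\<gamma> n)\<^sup>2 / \<mu>)"
    using relaxed_step_coefficients[OF beta_pos eps(1) _ gamma_ge gamma_le, of "lam n"] lambda[of n] eps
    unfolding \<mu>_def by auto
  have "\<epsilon> ^ 3 / 2 * (norm (residual n))\<^sup>2 \<le> lam n * (2 - lam n - \<mu>) * (norm (residual n))\<^sup>2"
    and "\<beta> * \<epsilon> ^ 4 / 2 * (norm g)\<^sup>2 \<le> lam n * (2 * \<gamma> n * \<beta> - (\<gamma> n)\<^sup>2 / \<mu>) * (norm g)\<^sup>2"
    by (rule mult_right_mono[OF c1 zero_le_power2], rule mult_right_mono[OF c2 zero_le_power2])
  ultimately show ?thesis unfolding d_def g_def by linarith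
qed

lemma exact_step_norm_le:
  assumes "z \<in> zer (op_plus A B)"
  shows "norm (x n + lam n *\<^sub>R residual n - z) \<le> norm (x n - z)"
proof -
  have "0 \<le> \<epsilon> ^ 3 / 2 * (norm (residual n))\<^sup>2" "0 \<le> \<beta> * \<epsilon> ^ 4 / 2 * (norm (B (x n) - B z))\<^sup>2"
    using beta_pos eps by simp_all
  then have "(norm (x n + lam n *\<^sub>R residual n - z))\<^sup>2 \<le> (norm (x n - z))\<^sup>2"
    using exact_step_estimate[OF assms, of n] by linarith
  then show ?thesis by (rule power2_le_imp_le) simp
qed

lemma norm_Suc_diff_le_exact_step:
  "norm (x (Suc n) - z) \<le> norm (x n + lam n *\<^sub>R residual n - z) + perturbation n"
  using norm_triangle_ineq[of "x (Suc n) - (x n + lam n *\<^sub>R residual n)" "x n + lam n *\<^sub>R residual n - z"]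
    dist_exact_step_le[of n] by simp

lemma fejer_step:
  assumes "z \<in> zer (op_plus A B)"
  shows "norm (x (Suc n) - z) \<le> norm (x n - z) + perturbation n"
  using norm_Suc_diff_le_exact_step[of n z] exact_step_norm_le[OF assms, of n] by linarith

lemma norm_diff_le_bound:
  assumes "z \<in> zer (op_plus A B)"
  shows "norm (x n - z) \<le> norm (x 0 - z) + suminf perturbation"
  by (rule quasi_fejer_bounded[OF fejer_step[OF assms] summable_perturbation perturbation_nonneg])

lemma summable_residual_forward:
  assumes "z \<in> zer (op_plus A B)"
  shows "summable (\<lambda>n. \<epsilon> ^ 3 / 2 * (norm (residual n))\<^sup>2 + \<beta> * \<epsilon> ^ 4 / 2 * (norm (B (x n) - B z))\<^sup>2)"
proof -
  define M where "M = norm (x 0 - z) + suminf perturbation"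
  define e where "e n = 2 * M * perturbation n + (perturbation n)\<^sup>2" for n
  have "M \<ge> 0" unfolding M_def using suminf_nonneg[OF summable_perturbation perturbation_nonneg] by simp
  have sum_e: "summable e" unfolding e_def
    using summable_perturbation summable_power2_of_summable_nonneg[OF summable_perturbation perturbation_nonneg]
    by (intro summable_add summable_mult)
  have e_nonneg: "0 \<le> e n" for n using \<open>M \<ge> 0\<close> perturbation_nonneg[of n] by (simp add: e_def)
  have step: "\<epsilon> ^ 3 / 2 * (norm (residual n))\<^sup>2 + \<beta> * \<epsilon> ^ 4 / 2 * (norm (B (x n) - B z))\<^sup>2
      \<le> (norm (x n - z))\<^sup>2 - (norm (x (Suc n) - z))\<^sup>2 + e n" for n
  proof -
    define y where "y = norm (x n + lam n *\<^sub>R residual n - z)"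
    have "y \<le> M" unfolding y_def M_def
      using exact_step_norm_le[OF assms, of n] norm_diff_le_bound[OF assms, of n] by linarith
    have "(norm (x (Suc n) - z))\<^sup>2 \<le> (y + perturbation n)\<^sup>2"
      using norm_Suc_diff_le_exact_step[of n z] unfolding y_def by (intro power_mono) auto
    also have "\<dots> \<le> y\<^sup>2 + e n"
      using \<open>y \<le> M\<close> perturbation_nonneg[of n] by (simp add: e_def power2_sum mult_right_mono)
    finally show ?thesis using exact_step_estimate[OF assms, of n] unfolding y_def by linarith
  qed
  show ?thesis
    by (rule summable_of_telescoping_bound[OF _ _ step sum_e e_nonneg]) (use beta_pos eps in auto)
qed

lemma summable_residual: "summable (\<lambda>n. (norm (residual n))\<^sup>2)"
proof -
  obtain z where z: "z \<in> zer (op_plus A B)" using zer_ne by blast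
  have "0 < \<epsilon> ^ 3 / 2" using eps by simp
  show ?thesis
  proof (rule summable_comparison_test'[where N = 0])
    show "summable (\<lambda>n. 2 / \<epsilon> ^ 3
        * (\<epsilon> ^ 3 / 2 * (norm (residual n))\<^sup>2 + \<beta> * \<epsilon> ^ 4 / 2 * (norm (B (x n) - B z))\<^sup>2))"
      using summable_residual_forward[OF z] by (rule summable_mult)
    show "norm ((norm (residual n))\<^sup>2)
        \<le> 2 / \<epsilon> ^ 3 * (\<epsilon> ^ 3 / 2 * (norm (residual n))\<^sup>2 + \<beta> * \<epsilon> ^ 4 / 2 * (norm (B (x n) - B z))\<^sup>2)"
      for n using eps beta_pos by (simp add: field_simps)
  qed
qed

lemma summable_forward:
  assumes "z \<in> zer (op_plus A B)"
  shows "summable (\<lambda>n. (norm (B (x n) - B z))\<^sup>2)"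
proof (rule summable_comparison_test'[where N = 0])
  show "summable (\<lambda>n. 2 / (\<beta> * \<epsilon> ^ 4)
      * (\<epsilon> ^ 3 / 2 * (norm (residual n))\<^sup>2 + \<beta> * \<epsilon> ^ 4 / 2 * (norm (B (x n) - B z))\<^sup>2))"
    using summable_residual_forward[OF assms] by (rule summable_mult)
  show "norm ((norm (B (x n) - B z))\<^sup>2)
      \<le> 2 / (\<beta> * \<epsilon> ^ 4) * (\<epsilon> ^ 3 / 2 * (norm (residual n))\<^sup>2 + \<beta> * \<epsilon> ^ 4 / 2 * (norm (B (x n) - B z))\<^sup>2)"
    for n using eps beta_pos by (simp add: field_simps)
qed

definition forward_backward_map :: "'a \<Rightarrow> 'a" where
  "forward_backward_map p = resolvent (op_scale \<epsilon> A) (p - \<epsilon> *\<^sub>R B p)"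

lemma forward_backward_map_nonexpansive:
  "norm (forward_backward_map p - forward_backward_map q) \<le> norm (p - q)"
proof -
  have "norm (forward_backward_map p - forward_backward_map q)
      \<le> norm ((p - \<epsilon> *\<^sub>R B p) - (q - \<epsilon> *\<^sub>R B q))"
    unfolding forward_backward_map_def by (rule resolvent_nonexpansive[OF A_mm eps(1)])
  also have "\<dots> \<le> norm (p - q)"
    using eps by (intro cocoercive_forward_step_nonexpansive[OF B_coco]) auto
  finally show ?thesis .
qed

lemma forward_backward_map_fixed_iff: "forward_backward_map z = z \<longleftrightarrow> z \<in> zer (op_plus A B)"
  unfolding forward_backward_map_def by (rule resolvent_forward_fixed_point_iff[OF A_mm eps(1)])

lemma forward_backward_map_regular: "(\<lambda>n. norm (x n - forward_backward_map (x n))) \<longlonglongrightarrow> 0"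
proof (rule tendsto_sandwich[OF _ _ tendsto_const])
  show "\<forall>\<^sub>F n in sequentially. norm (x n - forward_backward_map (x n)) \<le> norm (residual n)"
    using resolvent_step_norm_mono[OF A_mm eps(1) gamma_ge]
    by (intro always_eventually) (auto simp: forward_backward_map_def residual_def norm_minus_commute)
  show "(\<lambda>n. norm (residual n)) \<longlonglongrightarrow> 0"
    using tendsto_zero_of_summable_norm_power2[OF summable_residual] by (simp add: tendsto_norm_zero_iff)
qed simp

lemma bounded_iterates: "\<exists>K. \<forall>n. norm (x n) \<le> K"
proof -
  obtain z where z: "z \<in> zer (op_plus A B)" using zer_ne by blast
  have "norm (x n) \<le> norm z + (norm (x 0 - z) + suminf perturbation)" for n
    using norm_triangle_ineq[of "x n - z" z] norm_diff_le_bound[OF z, of n] by simp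
  then show ?thesis by blast
qed

lemma weak_conv_zero: "\<exists>z \<in> zer (op_plus A B). weak_conv x z"
proof -
  obtain K where "\<And>n. norm (x n) \<le> K" using bounded_iterates by blast
  moreover have "convergent (\<lambda>n. norm (x n - z))" if "forward_backward_map z = z" for z
    using that fejer_step summable_perturbation perturbation_nonneg
    by (intro quasi_fejer_convergent) (auto simp: forward_backward_map_fixed_iff)
  ultimately show ?thesis
    using fejer_weak_conv_fixed_point[OF _ forward_backward_map_nonexpansive forward_backward_map_regular]
    by (metis forward_backward_map_fixed_iff)
qed

lemma forward_tendsto:
  assumes "z \<in> zer (op_plus A B)"
  shows "(\<lambda>n. B (x n)) \<longlonglongrightarrow> B z"
  using tendsto_zero_of_summable_norm_power2[OF summable_forward[OF assms]] by (simp add: LIM_zero_iff)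

lemma strong_conv_if_demiregular_A:
  assumes "z \<in> zer (op_plus A B)" "weak_conv x z" "demiregular_at A z"
  shows "x \<longlonglongrightarrow> z"
proof -
  define y where "y n = x n + residual n" for n
  define u where "u n = (1 / \<gamma> n) *\<^sub>R ((x n - \<gamma> n *\<^sub>R B (x n)) - y n)" for n
  have "u n \<in> A (y n)" for n
    using resolvent_mem[OF A_mm gamma_pos[of n]] by (simp add: u_def y_def residual_def)
  have res: "residual \<longlonglongrightarrow> 0" by (rule tendsto_zero_of_summable_norm_power2[OF summable_residual])
  have "(\<lambda>n. (1 / \<gamma> n) *\<^sub>R residual n) \<longlonglongrightarrow> 0"
  proof (rule Lim_null_comparison[where g = "\<lambda>n. (1 / \<epsilon>) * norm (residual n)"])
    show "\<forall>\<^sub>F n in sequentially. norm ((1 / \<gamma> n) *\<^sub>R residual n) \<le> (1 / \<epsilon>) * norm (residual n)"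
    proof (intro always_eventually allI)
      fix n
      have "norm (residual n) / \<gamma> n \<le> norm (residual n) / \<epsilon>"
        using gamma_ge[of n] eps by (intro divide_left_mono) auto
      then show "norm ((1 / \<gamma> n) *\<^sub>R residual n) \<le> (1 / \<epsilon>) * norm (residual n)"
        using gamma_pos[of n] by simp
    qed
    have "(\<lambda>n. norm (residual n)) \<longlonglongrightarrow> 0" using res by (simp add: tendsto_norm_zero_iff)
    then show "(\<lambda>n. (1 / \<epsilon>) * norm (residual n)) \<longlonglongrightarrow> 0"
      by (rule tendsto_mult_right_zero)
  qed
  then have "(\<lambda>n. - ((1 / \<gamma> n) *\<^sub>R residual n) - B (x n)) \<longlonglongrightarrow> - 0 - B z"
    using forward_tendsto[OF assms(1)] by (intro tendsto_intros)
  moreover have "u = (\<lambda>n. - ((1 / \<gamma> n) *\<^sub>R residual n) - B (x n))"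
  proof
    fix n
    show "u n = - ((1 / \<gamma> n) *\<^sub>R residual n) - B (x n)"
      using gamma_pos[of n] by (simp add: u_def y_def algebra_simps)
  qed
  ultimately have "u \<longlonglongrightarrow> - B z" by simp
  moreover have "weak_conv y z" unfolding y_def by (rule weak_conv_add_tendsto_zero[OF assms(2) res])
  moreover have "- B z \<in> A z" using assms(1) by (simp add: mem_zer_op_plus_iff)
  ultimately have "y \<longlonglongrightarrow> z"
    using assms(3) \<open>\<And>n. u n \<in> A (y n)\<close> unfolding demiregular_at_def gra_def by blast
  then have "(\<lambda>n. y n - residual n) \<longlonglongrightarrow> z - 0" using res by (intro tendsto_intros)
  then show ?thesis by (simp add: y_def)
qed

lemma strong_conv_if_demiregular_B:
  assumes "z \<in> zer (op_plus A B)" "weak_conv x z" "demiregular_at (\<lambda>y. {B y}) z"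
  shows "x \<longlonglongrightarrow> z"
  using assms forward_tendsto[OF assms(1)] unfolding demiregular_at_def gra_def by auto

lemma convergent_if_interior_zeros:
  assumes "interior (zer (op_plus A B)) \<noteq> {}"
  shows "\<exists>z \<in> zer (op_plus A B). x \<longlonglongrightarrow> z"
proof -
  obtain l where l: "x \<longlonglongrightarrow> l"
    using quasi_fejer_interior_convergent[OF assms fejer_step summable_perturbation perturbation_nonneg]
    by (auto simp: convergent_def)
  let ?T = forward_backward_map
  have "(\<lambda>n. ?T (x n) - ?T l) \<longlonglongrightarrow> 0"
  proof (rule Lim_null_comparison)
    show "\<forall>\<^sub>F n in sequentially. norm (?T (x n) - ?T l) \<le> norm (x n - l)"
      by (intro always_eventually allI forward_backward_map_nonexpansive)
    show "(\<lambda>n. norm (x n - l)) \<longlonglongrightarrow> 0" by (rule tendsto_norm_zero[OF LIM_zero[OF l]])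
  qed
  then have "(\<lambda>n. ?T (x n)) \<longlonglongrightarrow> ?T l" by (rule LIM_zero_cancel)
  moreover have "(\<lambda>n. x n - ?T (x n)) \<longlonglongrightarrow> 0"
    using forward_backward_map_regular by (simp only: tendsto_norm_zero_iff)
  then have "(\<lambda>n. x n - (x n - ?T (x n))) \<longlonglongrightarrow> l - 0" using l by (intro tendsto_diff)
  then have "(\<lambda>n. ?T (x n)) \<longlonglongrightarrow> l" by simp
  ultimately have "?T l = l" by (rule LIMSEQ_unique)
  then show ?thesis using l forward_backward_map_fixed_iff by blast
qed

end


theorem proposition4p4:
  fixes A :: "'a::{real_inner, complete_space} \<Rightarrow> 'a set"
    and B :: "'a \<Rightarrow> 'a"
    and \<beta> \<epsilon> :: real
    and x0 :: 'a
    and \<gamma> lam :: "nat \<Rightarrow> real"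
    and a b x :: "nat \<Rightarrow> 'a"
  assumes beta_pos: "0 < \<beta>"
    and eps: "0 < \<epsilon>" "\<epsilon> < min (1/2) \<beta>"
    and A_mm: "maximally_monotone A"
    and B_coco: "cocoercive \<beta> B"
    and gamma: "\<And>n. \<epsilon> \<le> \<gamma> n \<and> \<gamma> n \<le> 2 * \<beta> / (1 + \<epsilon>)"
    and a_sum: "summable (\<lambda>n. norm (a n))"
    and b_sum: "summable (\<lambda>n. norm (b n))"
    and zer_ne: "zer (op_plus A B) \<noteq> {}"
    and lambda: "\<And>n. \<epsilon> \<le> lam n \<and> lam n \<le> (1 - \<epsilon>) * (2 + \<epsilon> - \<gamma> n / (2 * \<beta>))"
    and x0: "x 0 = x0"
    and x_rec: "\<And>n. x (Suc n) = x n + lam n *\<^sub>R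
        (resolvent (op_scale (\<gamma> n) A) (x n - \<gamma> n *\<^sub>R (B (x n) + b n)) + a n - x n)"
  shows "summable (\<lambda>n. (norm (resolvent (op_scale (\<gamma> n) A) (x n - \<gamma> n *\<^sub>R B (x n)) - x n))\<^sup>2)
    \<and> (\<forall>z \<in> zer (op_plus A B). summable (\<lambda>n. (norm (B (x n) - B z))\<^sup>2))
    \<and> (\<exists>z \<in> zer (op_plus A B). weak_conv x z)
    \<and> (((\<forall>z \<in> zer (op_plus A B). demiregular_at A z)
         \<or> (\<forall>z \<in> zer (op_plus A B). demiregular_at (\<lambda>y. {B y}) z)
         \<or> interior (zer (op_plus A B)) \<noteq> {})
        \<longrightarrow> (\<exists>z \<in> zer (op_plus A B). x \<longlonglongrightarrow> z))"
proof -
  interpret forward_backward_iteration A B \<beta> \<epsilon> \<gamma> lam a b x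
    by unfold_locales (fact beta_pos eps(1) eps(2) A_mm B_coco gamma a_sum b_sum zer_ne lambda x_rec)+
  obtain c where c: "c \<in> zer (op_plus A B)" "weak_conv x c" using weak_conv_zero by blast
  show ?thesis
  proof (intro conjI impI)
    show "summable (\<lambda>n. (norm (resolvent (op_scale (\<gamma> n) A) (x n - \<gamma> n *\<^sub>R B (x n)) - x n))\<^sup>2)"
      using summable_residual by (simp add: residual_def)
    show "\<forall>z \<in> zer (op_plus A B). summable (\<lambda>n. (norm (B (x n) - B z))\<^sup>2)"
      using summable_forward by blast
    show "\<exists>z \<in> zer (op_plus A B). weak_conv x z" using c by blast
    assume "(\<forall>z \<in> zer (op_plus A B). demiregular_at A z)
      \<or> (\<forall>z \<in> zer (op_plus A B). demiregular_at (\<lambda>y. {B y}) z)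
      \<or> interior (zer (op_plus A B)) \<noteq> {}"
    then show "\<exists>z \<in> zer (op_plus A B). x \<longlonglongrightarrow> z"
      using c strong_conv_if_demiregular_A strong_conv_if_demiregular_B convergent_if_interior_zeros
      by blast
  qed
qed

end
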